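(* Assume the hypotheses listed below. A random field $u\in\mathcal{C}(\mathbf{F}^B,[0,T]\times\overline{G})$ is a stochastic viscosity solution of the SPDE $(f,g,h)$ if and only if $v(t,x)=\varepsilon(t,x,u(t,x))$ is a stochastic viscosity solution of the SPDE $(\tilde f,0,\tilde h)$, where $$\tilde f(t,x,y,z)=\frac{1}{D_y\eta(t,x,y)}\Big[f\big(t,x,\eta(t,x,y),\sigma(x)^*D_x\eta(t,x,y)+D_y\eta(t,x,y)z\big)-\tfrac12\langle g,D_yg\rangle(t,x,\eta(t,x,y))+L_x\eta(t,x,y)+\langle\sigma(x)^*D_{xy}\eta(t,x,y),z\rangle+\tfrac12D_{yy}\eta(t,x,y)|z|^2\Big],$$ $$\tilde h(t,x,y)=\frac{1}{D_y\eta(t,x,y)}\Big(h(t,x,\eta(t,x,y))+\langle D_x\eta(t,x,y),\nabla\phi(x)\rangle\Big),$$ with $L_x$ denoting the operator $L$ acting on the $x$-variable.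
   Context: Let $W$ and $B$ be independent $d$-dimensional Brownian motions on $(\Omega_1,\mathcal F_1,\mathbb P_1)$ and $(\Omega_2,\mathcal F_2,\mathbb P_2)$, $\Omega=\Omega_1\times\Omega_2$, $\mathbb P=\mathbb P_1\otimes\mathbb P_2$, $\mathcal{F}^B_{t,T}=\sigma\{B_r-B_t,\ t\le r\le T\}$, $\mathbf F^B=\{\mathcal F^B_{t,T}\}_{0\le t\le T}$, and $\mathcal M^B_{0,T}$ the set of $\mathbf F^B$-stopping times with values in $[0,T]$. $\mathcal C(\mathbf F^B,[0,T]\times\overline G)$ denotes continuous random fields $\alpha(t,\omega,x)$ that are $\mathcal F^B_T\otimes\mathcal B$-measurable with $(t,\omega)\mapsto\alpha(t,\omega,x)$ $\mathbf F^B$-progressively measurable; $\mathcal C^{1,2}(\mathcal F^B_\tau,[0,T]\times\mathbb R^n)$ denotes $\mathcal F^B_\tau\otimes\mathcal B$-measurable random fields that are $C^1$ in $t$ and $C^2$ in $x$. $G\subset\mathbb R^n$ is an open connected bounded smooth domain with $G=\{\phi>0\}$, $\partial G=\{\phi=0\}$ for some $\phi\in C^2_b(\mathbb R^n)$, $\nabla\phi(x)$ the unit inward normal on $\partial G$, and $\partial\psi/\partial n=\langle D_x\psi,\nabla\phi\rangle$. Hypotheses: $f:\Omega_2\times[0,T]\times\overline G\times\mathbb R\times\mathbb R^d\to\mathbb R$ and $h:\Omega_2\times[0,T]\times\overline G\times\mathbb R\to\mathbb R$ are continuous, Lipschitz in $x$, with $|f(t,x,y,z)|\le K(1+|y|+|x|+\|z\|)$,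 $|h(t,x,y)|\le K(1+|y|+|x|)$, $|f(t,x,y_1,z_1)-f(t,x,y_2,z_2)|^2\le c(|y_1-y_2|^2+\|z_1-z_2\|^2)$, $|h(t,x,y_1)-h(t,x,y_2)|\le\beta_1|y_1-y_2|$ uniformly in $x$; $\sigma:\mathbb R^n\to\mathbb R^{n\times d}$, $b:\mathbb R^n\to\mathbb R^n$ are uniformly Lipschitz; $l:\overline G\to\mathbb R$ is continuous with $|l(x)|\le K(1+|x|)$; $g\in C_b^{0,2,3}([0,T]\times\overline G\times\mathbb R;\mathbb R^d)$ (bounded with bounded derivatives up to order 2 in $x$ and 3 in $y$). $L=\frac12\sum_{i,j}(\sigma\sigma^* )_{ij}(x)\partial^2_{x_ix_j}+\sum_i b_i(x)\partial_{x_i}$. The SPDE $(f,g,h)$ is: $du+[Lu+f(t,x,u,\sigma^*(x)D_xu)]dt+\sum_{i=1}^d g_i(t,x,u)\,\overleftarrow{dB}^i_t=0$ on $[0,T]\times G$, $u(T,x)=l(x)$, $\frac{\partial u}{\partial n}+h(t,x,u)=0$ on $\partial G$ (with $\overleftarrow{dB}$ the backward Itô integral). $\eta(t,x,y)$ is the solution of $\eta(t,x,y)=y+\int_t^T\langle g(s,x,\eta(s,x,y)),\circ\overleftarrow{dB}_s\rangle$ (backward Stratonovich), $y\mapsto\eta(t,x,y)$ is a strictly increasing diffeomorphism, and $\varepsilon(t,x,\cdot)$ is its $y$-inverse. Write $A_{f,g}(\varphi(t,x))=-L\varphi(t,x)-f(t,x,\varphi(t,x),\sigma^*(x)D_x\varphi(t,x))+\frac12\langle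 g,D_yg\rangle(t,x,\varphi(t,x))$. Definition: $u\in\mathcal C(\mathbf F^B,[0,T]\times\overline G)$ is a stochastic viscosity subsolution of the SPDE $(f,g,h)$ if $u(T,x)\le l(x)$ on $\overline G$ and, for every $\tau\in\mathcal M^B_{0,T}$, every $\mathcal F^B_\tau$-measurable $G$-valued $\xi$, and every $\varphi\in\mathcal C^{1,2}(\mathcal F^B_\tau,[0,T]\times\mathbb R^n)$ such that for a.e. $\omega\in\{0<\tau<T\}$, $u(t,x)-\eta(t,x,\varphi(t,x))\le0=u(\tau,\xi)-\eta(\tau,\xi,\varphi(\tau,\xi))$ for $(t,x)$ in a neighbourhood of $(\tau,\xi)$, one has, with $\psi(t,x)=\eta(t,x,\varphi(t,x))$: (a) $A_{f,g}(\psi(\tau,\xi))-D_y\eta(\tau,\xi,\varphi(\tau,\xi))D_t\varphi(\tau,\xi)\le0$ a.s. on $\{0<\tau<T\}$; (b) $\min[A_{f,g}(\psi(\tau,\xi))-D_y\eta(\tau,\xi,\varphi(\tau,\xi))D_t\varphi(\tau,\xi),\ -\frac{\partial\psi}{\partial n}(\tau,\xi)-h(\tau,\xi,\psi(\tau,\xi))]\le0$ a.s. on $\{0<\tau<T\}\cap\{\xi\in\partial G\}$. Supersolution: reverse all inequalities ($\ge$, and $\max$ in place of $\min$). Solution: both. For $g\equiv0$ the flow $\eta$ is the identity, so $\psi=\varphi$. *)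

theory Defs
  imports "HOL-Probability.Probability"
begin

section \<open>Classical derivatives (partial derivatives via difference quotients along basis directions)\<close>

definition dd :: "'v::real_normed_vector \<Rightarrow> ('v \<Rightarrow> real) \<Rightarrow> 'v \<Rightarrow> real" where
  "dd e H p = deriv (\<lambda>s. H (p + s *\<^sub>R e)) 0"

definition C2 :: "('v::euclidean_space \<Rightarrow> real) \<Rightarrow> bool" where
  "C2 H \<longleftrightarrow> continuous_on UNIV H \<and>
     (\<forall>e\<in>Basis. \<forall>e'\<in>Basis. \<forall>p.
        ((\<lambda>s. H (p + s *\<^sub>R e)) has_real_derivative dd e H p) (at 0) \<and>
        ((\<lambda>s. dd e' H (p + s *\<^sub>R e)) has_real_derivative dd e (dd e' H) p) (at 0)) \<and>
     (\<forall>e\<in>Basis. continuous_on UNIV (dd e H)) \<and>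
     (\<forall>e\<in>Basis. \<forall>e'\<in>Basis. continuous_on UNIV (dd e (dd e' H)))"

definition pd :: "'n::finite \<Rightarrow> (real^'n \<Rightarrow> real) \<Rightarrow> real^'n \<Rightarrow> real" where
  "pd i F x = dd (axis i 1) F x"

definition grad :: "(real^'n::finite \<Rightarrow> real) \<Rightarrow> real^'n \<Rightarrow> real^'n" where
  "grad F x = (\<chi> i. pd i F x)"

definition Dt :: "(real \<Rightarrow> 'x \<Rightarrow> real) \<Rightarrow> real \<Rightarrow> 'x \<Rightarrow> real" where
  "Dt \<phi> t x = deriv (\<lambda>s. \<phi> s x) t"

definition Dy :: "(real \<Rightarrow> 'x \<Rightarrow> real \<Rightarrow> real) \<Rightarrow> real \<Rightarrow> 'x \<Rightarrow> real \<Rightarrow> real" where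
  "Dy F t x y = deriv (\<lambda>y'. F t x y') y"

definition Dx :: "'n::finite \<Rightarrow> (real \<Rightarrow> real^'n \<Rightarrow> real \<Rightarrow> real) \<Rightarrow> real \<Rightarrow> real^'n \<Rightarrow> real \<Rightarrow> real" where
  "Dx i F t x y = pd i (\<lambda>x'. F t x' y) x"

definition Lop :: "(real^'n \<Rightarrow> real^'d^'n) \<Rightarrow> (real^'n \<Rightarrow> real^'n) \<Rightarrow> (real^'n::finite \<Rightarrow> real)
                    \<Rightarrow> real^'n \<Rightarrow> real" where
  "Lop \<sigma> b F x = (1/2) * (\<Sum>i\<in>UNIV. \<Sum>j\<in>UNIV. (\<sigma> x ** transpose (\<sigma> x)) $ i $ j * pd i (pd j F) x)
                  + (\<Sum>i\<in>UNIV. b x $ i * pd i F x)"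

definition sigDx :: "(real^'n \<Rightarrow> real^'d^'n) \<Rightarrow> (real^'n::finite \<Rightarrow> real) \<Rightarrow> real^'n \<Rightarrow> real^'d::finite" where
  "sigDx \<sigma> F x = transpose (\<sigma> x) *v grad F x"

definition dnormal :: "(real^'n::finite \<Rightarrow> real) \<Rightarrow> (real^'n \<Rightarrow> real) \<Rightarrow> real^'n \<Rightarrow> real" where
  "dnormal \<phi>G F x = grad F x \<bullet> grad \<phi>G x"

definition gDg :: "(real \<Rightarrow> real^'n \<Rightarrow> real \<Rightarrow> real^'d::finite) \<Rightarrow> real \<Rightarrow> real^'n \<Rightarrow> real \<Rightarrow> real" where
  "gDg g t x y = (\<Sum>i\<in>UNIV. g t x y $ i * deriv (\<lambda>y'. g t x y' $ i) y)"

text \<open>A_{f,g}(psi(t,x)) for a deterministic (fixed omega) field psi.\<close>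
definition Aop :: "(real^'n \<Rightarrow> real^'d^'n) \<Rightarrow> (real^'n \<Rightarrow> real^'n)
     \<Rightarrow> (real \<Rightarrow> real^'n \<Rightarrow> real \<Rightarrow> real^'d \<Rightarrow> real) \<Rightarrow> (real \<Rightarrow> real^'n \<Rightarrow> real \<Rightarrow> real^'d::finite)
     \<Rightarrow> (real \<Rightarrow> real^'n::finite \<Rightarrow> real) \<Rightarrow> real \<Rightarrow> real^'n \<Rightarrow> real" where
  "Aop \<sigma> b f g \<psi> t x = - Lop \<sigma> b (\<psi> t) x - f t x (\<psi> t x) (sigDx \<sigma> (\<psi> t) x) + gDg g t x (\<psi> t x) / 2"

definition C12 :: "(real \<Rightarrow> real^'n::finite \<Rightarrow> real) \<Rightarrow> bool" where
  "C12 \<phi> \<longleftrightarrow> (\<forall>t x. ((\<lambda>s. \<phi> s x) has_real_derivative Dt \<phi> t x) (at t)) \<and>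
     continuous_on UNIV (\<lambda>(t,x). Dt \<phi> t x) \<and>
     (\<forall>t. C2 (\<phi> t)) \<and>
     continuous_on UNIV (\<lambda>(t,x). \<phi> t x) \<and>
     (\<forall>i. continuous_on UNIV (\<lambda>(t,x). pd i (\<phi> t) x)) \<and>
     (\<forall>i j. continuous_on UNIV (\<lambda>(t,x). pd i (pd j (\<phi> t)) x))"

definition C2b :: "(real^'n::finite \<Rightarrow> real) \<Rightarrow> bool" where
  "C2b \<phi> \<longleftrightarrow> C2 \<phi> \<and> bounded (range \<phi>) \<and> (\<forall>i. bounded (range (pd i \<phi>))) \<and>
      (\<forall>i j. bounded (range (pd i (pd j \<phi>))))"

text \<open>g in C_b^{0,2,3}([0,T] x R^n x R; R^d): for every component, the derivatives
  D_x^alpha D_y^k g (|alpha| <= 2, k <= 3) exist, are continuous and bounded.\<close>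
definition Cb023 :: "real \<Rightarrow> (real \<Rightarrow> real^'n::finite \<Rightarrow> real \<Rightarrow> real^'d::finite) \<Rightarrow> bool" where
  "Cb023 T g \<longleftrightarrow> (\<forall>j::'d. \<forall>k::nat. \<forall>ixs::'n list. k \<le> 3 \<and> length ixs \<le> 2 \<longrightarrow>
     (let H = foldr Dx ixs ((Dy ^^ k) (\<lambda>t x y. g t x y $ j)) in
        (\<exists>C. \<forall>t\<in>{0..T}. \<forall>x y. \<bar>H t x y\<bar> \<le> C) \<and>
        continuous_on ({0..T} \<times> UNIV \<times> UNIV) (\<lambda>(t,x,y). H t x y) \<and>
        (length ixs < 2 \<longrightarrow> (\<forall>i t x y. ((\<lambda>s. H t (x + s *\<^sub>R axis i 1) y) has_real_derivative Dx i H t x y) (at 0))) \<and>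
        (ixs = [] \<and> k < 3 \<longrightarrow> (\<forall>t x y. ((\<lambda>y'. H t x y') has_real_derivative Dy H t x y) (at y)))))"

section \<open>Brownian motion and its backward filtration\<close>

definition brownian_motion :: "'a measure \<Rightarrow> (real \<Rightarrow> 'a \<Rightarrow> real^'d::finite) \<Rightarrow> bool" where
  "brownian_motion M B \<longleftrightarrow> prob_space M \<and>
     (\<forall>t i. (\<lambda>\<omega>. B t \<omega> $ i) \<in> borel_measurable M) \<and>
     (\<forall>\<omega>\<in>space M. B 0 \<omega> = 0 \<and> continuous_on {0..} (\<lambda>t. B t \<omega>)) \<and>
     (\<forall>ts::real list. sorted ts \<and> distinct ts \<and> (\<forall>t\<in>set ts. 0 \<le> t) \<longrightarrow>
        prob_space.indep_vars M (\<lambda>_. borel)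
          (\<lambda>p \<omega>. B (ts ! Suc (fst p)) \<omega> $ snd p - B (ts ! fst p) \<omega> $ snd p) ({..<length ts - 1} \<times> UNIV) \<and>
        (\<forall>m<length ts - 1. \<forall>i. distributed M lborel (\<lambda>\<omega>. B (ts ! Suc m) \<omega> $ i - B (ts ! m) \<omega> $ i)
             (\<lambda>x. ennreal (normal_density 0 (sqrt (ts ! Suc m - ts ! m)) x))))"

text \<open>F^B_{t,T} = sigma{B_r - B_t, t <= r <= T} (a decreasing family in t).\<close>
definition FB :: "'a measure \<Rightarrow> (real \<Rightarrow> 'a \<Rightarrow> real^'d::finite) \<Rightarrow> real \<Rightarrow> real \<Rightarrow> 'a measure" where
  "FB M B T t = sigma (space M)
     (\<Union>r\<in>{t..T}. {(\<lambda>\<omega>. B r \<omega> - B t \<omega>) -` A \<inter> space M | A. A \<in> sets borel})"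

definition bstop :: "'a measure \<Rightarrow> (real \<Rightarrow> 'a \<Rightarrow> real^'d::finite) \<Rightarrow> real \<Rightarrow> ('a \<Rightarrow> real) \<Rightarrow> bool" where
  "bstop M B T \<tau> \<longleftrightarrow> (\<forall>\<omega>\<in>space M. 0 \<le> \<tau> \<omega> \<and> \<tau> \<omega> \<le> T) \<and>
     (\<forall>t\<in>{0..T}. {\<omega>\<in>space M. t \<le> \<tau> \<omega>} \<in> sets (FB M B T t))"

definition FBtau :: "'a measure \<Rightarrow> (real \<Rightarrow> 'a \<Rightarrow> real^'d::finite) \<Rightarrow> real \<Rightarrow> ('a \<Rightarrow> real) \<Rightarrow> 'a measure" where
  "FBtau M B T \<tau> = sigma (space M)
     {A. A \<subseteq> space M \<and> (\<forall>t\<in>{0..T}. A \<inter> {\<omega>\<in>space M. t \<le> \<tau> \<omega>} \<in> sets (FB M B T t))}"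

definition CFB :: "'a measure \<Rightarrow> (real \<Rightarrow> 'a \<Rightarrow> real^'d::finite) \<Rightarrow> real \<Rightarrow> (real^'n::finite) set
                   \<Rightarrow> ('a \<Rightarrow> real \<Rightarrow> real^'n \<Rightarrow> real) \<Rightarrow> bool" where
  "CFB M B T Gb \<alpha> \<longleftrightarrow>
     (\<forall>\<omega>\<in>space M. continuous_on ({0..T} \<times> Gb) (\<lambda>(t,x). \<alpha> \<omega> t x)) \<and>
     (\<lambda>(\<omega>,(t,x)). \<alpha> \<omega> t x) \<in> borel_measurable (FB M B T 0 \<Otimes>\<^sub>M restrict_space borel ({0..T} \<times> Gb)) \<and>
     (\<forall>x\<in>Gb. \<forall>t\<in>{0..T}. (\<lambda>(s,\<omega>). \<alpha> \<omega> s x)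
        \<in> borel_measurable (restrict_space borel {t..T} \<Otimes>\<^sub>M FB M B T t))"

definition C12F :: "'a measure \<Rightarrow> (real \<Rightarrow> 'a \<Rightarrow> real^'d::finite) \<Rightarrow> real \<Rightarrow> ('a \<Rightarrow> real)
                   \<Rightarrow> ('a \<Rightarrow> real \<Rightarrow> real^'n::finite \<Rightarrow> real) \<Rightarrow> bool" where
  "C12F M B T \<tau> \<phi> \<longleftrightarrow>
     (\<lambda>(\<omega>,(t,x)). \<phi> \<omega> t x) \<in> borel_measurable (FBtau M B T \<tau> \<Otimes>\<^sub>M borel) \<and>
     (\<forall>\<omega>\<in>space M. C12 (\<phi> \<omega>))"

section \<open>Stochastic viscosity sub/supersolutions\<close>

definition touch_above :: "real \<Rightarrow> (real^'n::finite) set \<Rightarrow> (real \<Rightarrow> real^'n \<Rightarrow> real) \<Rightarrow> (real \<Rightarrow> real^'n \<Rightarrow> real)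
                           \<Rightarrow> real \<Rightarrow> real^'n \<Rightarrow> bool" where
  "touch_above T Gb U \<Psi> t0 x0 \<longleftrightarrow>
     (\<exists>e>0. \<forall>t\<in>{0..T}. \<forall>x\<in>Gb. \<bar>t - t0\<bar> < e \<and> dist x x0 < e \<longrightarrow> U t x - \<Psi> t x \<le> 0) \<and>
     U t0 x0 - \<Psi> t0 x0 = 0"

definition touch_below :: "real \<Rightarrow> (real^'n::finite) set \<Rightarrow> (real \<Rightarrow> real^'n \<Rightarrow> real) \<Rightarrow> (real \<Rightarrow> real^'n \<Rightarrow> real)
                           \<Rightarrow> real \<Rightarrow> real^'n \<Rightarrow> bool" where
  "touch_below T Gb U \<Psi> t0 x0 \<longleftrightarrow>
     (\<exists>e>0. \<forall>t\<in>{0..T}. \<forall>x\<in>Gb. \<bar>t - t0\<bar> < e \<and> dist x x0 < e \<longrightarrow> U t x - \<Psi> t x \<ge> 0) \<and>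
     U t0 x0 - \<Psi> t0 x0 = 0"

text \<open>Parameters: M (probability space), B (Brownian motion), T, G (domain), phiG (defining
  function of G), sigma, b, l (terminal datum), f, g, eta (the flow associated with g), h, u.\<close>
definition visc_sub ::
  "'a measure \<Rightarrow> (real \<Rightarrow> 'a \<Rightarrow> real^'d::finite) \<Rightarrow> real \<Rightarrow> (real^'n::finite) set \<Rightarrow> (real^'n \<Rightarrow> real)
   \<Rightarrow> (real^'n \<Rightarrow> real^'d^'n) \<Rightarrow> (real^'n \<Rightarrow> real^'n) \<Rightarrow> (real^'n \<Rightarrow> real)
   \<Rightarrow> ('a \<Rightarrow> real \<Rightarrow> real^'n \<Rightarrow> real \<Rightarrow> real^'d \<Rightarrow> real) \<Rightarrow> (real \<Rightarrow> real^'n \<Rightarrow> real \<Rightarrow> real^'d)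
   \<Rightarrow> ('a \<Rightarrow> real \<Rightarrow> real^'n \<Rightarrow> real \<Rightarrow> real) \<Rightarrow> ('a \<Rightarrow> real \<Rightarrow> real^'n \<Rightarrow> real \<Rightarrow> real)
   \<Rightarrow> ('a \<Rightarrow> real \<Rightarrow> real^'n \<Rightarrow> real) \<Rightarrow> bool" where
  "visc_sub M B T G \<phi>G \<sigma> b l f g \<eta> h u \<longleftrightarrow>
     CFB M B T (closure G) u \<and>
     (\<forall>\<omega>\<in>space M. \<forall>x\<in>closure G. u \<omega> T x \<le> l x) \<and>
     (\<forall>\<tau> \<xi> \<phi>. bstop M B T \<tau> \<and> \<xi> \<in> borel_measurable (FBtau M B T \<tau>) \<and>
        (\<forall>\<omega>\<in>space M. \<xi> \<omega> \<in> closure G) \<and> C12F M B T \<tau> \<phi> \<and>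
        (AE \<omega> in M. 0 < \<tau> \<omega> \<and> \<tau> \<omega> < T \<longrightarrow>
            touch_above T (closure G) (u \<omega>) (\<lambda>t x. \<eta> \<omega> t x (\<phi> \<omega> t x)) (\<tau> \<omega>) (\<xi> \<omega>))
      \<longrightarrow>
        (AE \<omega> in M. 0 < \<tau> \<omega> \<and> \<tau> \<omega> < T \<and> \<xi> \<omega> \<in> G \<longrightarrow>
            Aop \<sigma> b (f \<omega>) g (\<lambda>t x. \<eta> \<omega> t x (\<phi> \<omega> t x)) (\<tau> \<omega>) (\<xi> \<omega>)
            - Dy (\<eta> \<omega>) (\<tau> \<omega>) (\<xi> \<omega>) (\<phi> \<omega> (\<tau> \<omega>) (\<xi> \<omega>)) * Dt (\<phi> \<omega>) (\<tau> \<omega>) (\<xi> \<omega>) \<le> 0) \<and>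
        (AE \<omega> in M. 0 < \<tau> \<omega> \<and> \<tau> \<omega> < T \<and> \<xi> \<omega> \<in> frontier G \<longrightarrow>
            min (Aop \<sigma> b (f \<omega>) g (\<lambda>t x. \<eta> \<omega> t x (\<phi> \<omega> t x)) (\<tau> \<omega>) (\<xi> \<omega>)
                  - Dy (\<eta> \<omega>) (\<tau> \<omega>) (\<xi> \<omega>) (\<phi> \<omega> (\<tau> \<omega>) (\<xi> \<omega>)) * Dt (\<phi> \<omega>) (\<tau> \<omega>) (\<xi> \<omega>))
                (- dnormal \<phi>G (\<lambda>x. \<eta> \<omega> (\<tau> \<omega>) x (\<phi> \<omega> (\<tau> \<omega>) x)) (\<xi> \<omega>)
                  - h \<omega> (\<tau> \<omega>) (\<xi> \<omega>) (\<eta> \<omega> (\<tau> \<omega>) (\<xi> \<omega>) (\<phi> \<omega> (\<tau> \<omega>) (\<xi> \<omega>)))) \<le> 0))"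

definition visc_super ::
  "'a measure \<Rightarrow> (real \<Rightarrow> 'a \<Rightarrow> real^'d::finite) \<Rightarrow> real \<Rightarrow> (real^'n::finite) set \<Rightarrow> (real^'n \<Rightarrow> real)
   \<Rightarrow> (real^'n \<Rightarrow> real^'d^'n) \<Rightarrow> (real^'n \<Rightarrow> real^'n) \<Rightarrow> (real^'n \<Rightarrow> real)
   \<Rightarrow> ('a \<Rightarrow> real \<Rightarrow> real^'n \<Rightarrow> real \<Rightarrow> real^'d \<Rightarrow> real) \<Rightarrow> (real \<Rightarrow> real^'n \<Rightarrow> real \<Rightarrow> real^'d)
   \<Rightarrow> ('a \<Rightarrow> real \<Rightarrow> real^'n \<Rightarrow> real \<Rightarrow> real) \<Rightarrow> ('a \<Rightarrow> real \<Rightarrow> real^'n \<Rightarrow> real \<Rightarrow> real)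
   \<Rightarrow> ('a \<Rightarrow> real \<Rightarrow> real^'n \<Rightarrow> real) \<Rightarrow> bool" where
  "visc_super M B T G \<phi>G \<sigma> b l f g \<eta> h u \<longleftrightarrow>
     CFB M B T (closure G) u \<and>
     (\<forall>\<omega>\<in>space M. \<forall>x\<in>closure G. u \<omega> T x \<ge> l x) \<and>
     (\<forall>\<tau> \<xi> \<phi>. bstop M B T \<tau> \<and> \<xi> \<in> borel_measurable (FBtau M B T \<tau>) \<and>
        (\<forall>\<omega>\<in>space M. \<xi> \<omega> \<in> closure G) \<and> C12F M B T \<tau> \<phi> \<and>
        (AE \<omega> in M. 0 < \<tau> \<omega> \<and> \<tau> \<omega> < T \<longrightarrow>
            touch_below T (closure G) (u \<omega>) (\<lambda>t x. \<eta> \<omega> t x (\<phi> \<omega> t x)) (\<tau> \<omega>) (\<xi> \<omega>))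
      \<longrightarrow>
        (AE \<omega> in M. 0 < \<tau> \<omega> \<and> \<tau> \<omega> < T \<and> \<xi> \<omega> \<in> G \<longrightarrow>
            Aop \<sigma> b (f \<omega>) g (\<lambda>t x. \<eta> \<omega> t x (\<phi> \<omega> t x)) (\<tau> \<omega>) (\<xi> \<omega>)
            - Dy (\<eta> \<omega>) (\<tau> \<omega>) (\<xi> \<omega>) (\<phi> \<omega> (\<tau> \<omega>) (\<xi> \<omega>)) * Dt (\<phi> \<omega>) (\<tau> \<omega>) (\<xi> \<omega>) \<ge> 0) \<and>
        (AE \<omega> in M. 0 < \<tau> \<omega> \<and> \<tau> \<omega> < T \<and> \<xi> \<omega> \<in> frontier G \<longrightarrow>
            max (Aop \<sigma> b (f \<omega>) g (\<lambda>t x. \<eta> \<omega> t x (\<phi> \<omega> t x)) (\<tau> \<omega>) (\<xi> \<omega>)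
                  - Dy (\<eta> \<omega>) (\<tau> \<omega>) (\<xi> \<omega>) (\<phi> \<omega> (\<tau> \<omega>) (\<xi> \<omega>)) * Dt (\<phi> \<omega>) (\<tau> \<omega>) (\<xi> \<omega>))
                (- dnormal \<phi>G (\<lambda>x. \<eta> \<omega> (\<tau> \<omega>) x (\<phi> \<omega> (\<tau> \<omega>) x)) (\<xi> \<omega>)
                  - h \<omega> (\<tau> \<omega>) (\<xi> \<omega>) (\<eta> \<omega> (\<tau> \<omega>) (\<xi> \<omega>) (\<phi> \<omega> (\<tau> \<omega>) (\<xi> \<omega>)))) \<ge> 0))"

definition visc_sol where
  "visc_sol M B T G \<phi>G \<sigma> b l f g \<eta> h u \<longleftrightarrow>
     visc_sub M B T G \<phi>G \<sigma> b l f g \<eta> h u \<and> visc_super M B T G \<phi>G \<sigma> b l f g \<eta> h u"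

definition eps :: "('a \<Rightarrow> real \<Rightarrow> 'x \<Rightarrow> real \<Rightarrow> real) \<Rightarrow> 'a \<Rightarrow> real \<Rightarrow> 'x \<Rightarrow> real \<Rightarrow> real" where
  "eps \<eta> \<omega> t x = inv (\<eta> \<omega> t x)"

definition ftilde ::
  "(real^'n \<Rightarrow> real^'d^'n) \<Rightarrow> (real^'n \<Rightarrow> real^'n) \<Rightarrow> ('a \<Rightarrow> real \<Rightarrow> real^'n \<Rightarrow> real \<Rightarrow> real^'d \<Rightarrow> real)
   \<Rightarrow> (real \<Rightarrow> real^'n \<Rightarrow> real \<Rightarrow> real^'d::finite) \<Rightarrow> ('a \<Rightarrow> real \<Rightarrow> real^'n::finite \<Rightarrow> real \<Rightarrow> real)
   \<Rightarrow> 'a \<Rightarrow> real \<Rightarrow> real^'n \<Rightarrow> real \<Rightarrow> real^'d \<Rightarrow> real" where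
  "ftilde \<sigma> b f g \<eta> \<omega> t x y z =
     (1 / Dy (\<eta> \<omega>) t x y) *
       ( f \<omega> t x (\<eta> \<omega> t x y) (sigDx \<sigma> (\<lambda>x'. \<eta> \<omega> t x' y) x + Dy (\<eta> \<omega>) t x y *\<^sub>R z)
         - gDg g t x (\<eta> \<omega> t x y) / 2
         + Lop \<sigma> b (\<lambda>x'. \<eta> \<omega> t x' y) x
         + sigDx \<sigma> (\<lambda>x'. Dy (\<eta> \<omega>) t x' y) x \<bullet> z
         + Dy (Dy (\<eta> \<omega>)) t x y / 2 * (norm z)\<^sup>2 )"

definition htilde ::
  "(real^'n::finite \<Rightarrow> real) \<Rightarrow> ('a \<Rightarrow> real \<Rightarrow> real^'n \<Rightarrow> real \<Rightarrow> real)
   \<Rightarrow> ('a \<Rightarrow> real \<Rightarrow> real^'n \<Rightarrow> real \<Rightarrow> real) \<Rightarrow> 'a \<Rightarrow> real \<Rightarrow> real^'n \<Rightarrow> real \<Rightarrow> real" where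
  "htilde \<phi>G h \<eta> \<omega> t x y =
     (1 / Dy (\<eta> \<omega>) t x y) * (h \<omega> t x (\<eta> \<omega> t x y) + grad (\<lambda>x'. \<eta> \<omega> t x' y) x \<bullet> grad \<phi>G x)"

end

theory Submission
  imports Defs
begin

text \<open>Since \<open>y \<mapsto> \<eta>(t,x,y)\<close> is a strictly increasing bijection, \<open>u - \<eta>(\<cdot>,\<cdot>,\<phi>)\<close> has a local
  maximum (minimum) \<open>0\<close> at \<open>(\<tau>,\<xi>)\<close> exactly when \<open>v - \<phi>\<close> does, where \<open>v = \<epsilon>(\<cdot>,\<cdot>,u)\<close>: the test
  functions \<open>\<psi> = \<eta>(\<cdot>,\<cdot>,\<phi>)\<close> for \<open>u\<close> correspond to the test functions \<open>\<phi>\<close> for \<open>v\<close>.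
  The chain rule for \<open>\<psi>\<close> gives, pathwise and pointwise,
  \<open>A[f,g](\<psi>) - D\<^sub>y\<eta> D\<^sub>t\<phi> = D\<^sub>y\<eta> (A[ftilde,0](\<phi>) - D\<^sub>t\<phi>)\<close> and
  \<open>-\<partial>\<psi>/\<partial>n - h(\<psi>) = D\<^sub>y\<eta> (-\<partial>\<phi>/\<partial>n - htilde(\<phi>))\<close>; \<open>ftilde\<close> and \<open>htilde\<close> are
  defined precisely so that these identities hold. Since \<open>D\<^sub>y\<eta> > 0\<close>, the sign conditions
  defining sub- and supersolutions for \<open>u\<close> and for \<open>v\<close> coincide.\<close>

section \<open>Partial derivatives along the coordinate axes\<close>

lemma has_real_derivative_along_line:
  fixes H :: "'v::real_normed_vector \<Rightarrow> real"
  assumes der: "\<And>q. ((\<lambda>s. H (q + s *\<^sub>R e)) has_real_derivative D q) (at 0)"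
  shows "((\<lambda>s. H (p + s *\<^sub>R e)) has_real_derivative D (p + s0 *\<^sub>R e)) (at s0)"
proof -
  have "((\<lambda>s. H ((p + s0 *\<^sub>R e) + s *\<^sub>R e)) has_real_derivative D (p + s0 *\<^sub>R e)) (at (s0 + (-s0)))"
    using der by simp
  then have "((\<lambda>s. H ((p + s0 *\<^sub>R e) + (s + (-s0)) *\<^sub>R e)) has_real_derivative D (p + s0 *\<^sub>R e)) (at s0)"
    by (rule DERIV_shift[THEN iffD1])
  moreover have "(\<lambda>s. H ((p + s0 *\<^sub>R e) + (s + (-s0)) *\<^sub>R e)) = (\<lambda>s. H (p + s *\<^sub>R e))"
    by (simp add: algebra_simps)
  ultimately show ?thesis by simp
qed

lemma line_increment_bound:
  fixes H :: "'v::real_normed_vector \<Rightarrow> real"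
  assumes der: "\<And>q. ((\<lambda>s. H (q + s *\<^sub>R c)) has_real_derivative D q) (at 0)"
    and bound: "\<And>z. \<bar>z\<bar> \<le> \<bar>s\<bar> \<Longrightarrow> \<bar>D (q + z *\<^sub>R c) - a\<bar> \<le> e"
  shows "\<bar>H (q + s *\<^sub>R c) - H q - s * a\<bar> \<le> e * \<bar>s\<bar>"
proof -
  define g where "g z = H (q + z *\<^sub>R c) - z * a" for z
  have g': "(g has_field_derivative D (q + z *\<^sub>R c) - a) (at z within closed_segment 0 s)" for z
  proof -
    have lin: "((\<lambda>z. z * a) has_real_derivative a) (at z)"
      using DERIV_cmult_right[OF DERIV_ident, of a z] by simp
    show ?thesis
      unfolding g_def
      by (rule has_field_derivative_at_within, rule DERIV_diff[OF has_real_derivative_along_line[OF der] lin])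
  qed
  have g'_bound: "norm (D (q + z *\<^sub>R c) - a) \<le> e" if "z \<in> closed_segment 0 s" for z
    using bound that by (auto simp: closed_segment_eq_real_ivl split: if_splits)
  have "norm (g s - g 0) \<le> e * norm (s - 0)"
    by (rule field_differentiable_bound[OF _ g' g'_bound]) auto
  then show ?thesis by (simp add: g_def)
qed

lemma partials_increment_bound:
  fixes H :: "'v::euclidean_space \<Rightarrow> real"
  assumes der: "\<And>b q. b \<in> Basis \<Longrightarrow> ((\<lambda>s. H (q + s *\<^sub>R b)) has_real_derivative Db b q) (at 0)"
    and near: "\<And>b q. b \<in> Basis \<Longrightarrow> dist q p < d \<Longrightarrow> \<bar>Db b q - Db b p\<bar> \<le> e"
    and h: "real DIM('v) * norm h < d"
    and S: "S \<subseteq> Basis"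
  shows "\<bar>H (p + (\<Sum>b\<in>S. (h \<bullet> b) *\<^sub>R b)) - H p - (\<Sum>b\<in>S. (h \<bullet> b) * Db b p)\<bar>
           \<le> real (card S) * e * norm h"
proof -
  have "dist p p < d" by (simp add: le_less_trans[OF _ h])
  then have e: "e \<ge> 0" using near[OF SOME_Basis, of p] by simp
  have "finite S" using S finite_Basis finite_subset by blast
  then show ?thesis using S
  proof (induction S rule: finite_subset_induct'[where A=Basis])
    case empty
    then show ?case by simp
  next
    case (insert c F)
    define q where "q = p + (\<Sum>b\<in>F. (h \<bullet> b) *\<^sub>R b)"
    have c: "c \<in> Basis" and hc: "\<bar>h \<bullet> c\<bar> \<le> norm h"
      using insert by (auto simp: Basis_le_norm)
    have card: "real (card (insert c F)) = real (card F) + 1" "card (insert c F) \<le> DIM('v)"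
      using insert by (simp, intro card_mono) auto
    have "norm (\<Sum>b\<in>F. (h \<bullet> b) *\<^sub>R b) \<le> (\<Sum>b\<in>F. norm h)"
      using insert by (intro norm_sum[THEN order_trans] sum_mono) (auto simp: Basis_le_norm subset_iff)
    then have nF: "norm (\<Sum>b\<in>F. (h \<bullet> b) *\<^sub>R b) \<le> real (card F) * norm h" by simp
    have step: "\<bar>H (q + (h \<bullet> c) *\<^sub>R c) - H q - (h \<bullet> c) * Db c p\<bar> \<le> e * norm h"
    proof (rule line_increment_bound[OF der[OF c], THEN order_trans])
      fix z assume "\<bar>z\<bar> \<le> \<bar>h \<bullet> c\<bar>"
      then have "norm ((\<Sum>b\<in>F. (h \<bullet> b) *\<^sub>R b) + z *\<^sub>R c) \<le> real (card F) * norm h + norm h"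
        using nF hc c by (intro norm_triangle_le) simp
      also have "\<dots> \<le> real DIM('v) * norm h"
        using card mult_right_mono[of "real (card (insert c F))" "real DIM('v)" "norm h"]
        by (simp add: distrib_right)
      finally have "dist (q + z *\<^sub>R c) p < d" using h by (simp add: q_def dist_norm)
      then show "\<bar>Db c (q + z *\<^sub>R c) - Db c p\<bar> \<le> e" by (rule near[OF c])
    qed (use hc e in \<open>rule mult_left_mono\<close>)
    have IH: "\<bar>H q - H p - (\<Sum>b\<in>F. (h \<bullet> b) * Db b p)\<bar> \<le> real (card F) * e * norm h"
      using insert.IH by (simp add: q_def)
    have "p + (\<Sum>b\<in>insert c F. (h \<bullet> b) *\<^sub>R b) = q + (h \<bullet> c) *\<^sub>R c"
      using insert by (simp add: q_def algebra_simps)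
    moreover have "(\<Sum>b\<in>insert c F. (h \<bullet> b) * Db b p) = (h \<bullet> c) * Db c p + (\<Sum>b\<in>F. (h \<bullet> b) * Db b p)"
      using insert by simp
    moreover note abs_triangle_ineq[of "H (q + (h \<bullet> c) *\<^sub>R c) - H q - (h \<bullet> c) * Db c p"
        "H q - H p - (\<Sum>b\<in>F. (h \<bullet> b) * Db b p)"]
    ultimately show ?case
      using step IH card(1) by (simp add: algebra_simps)
  qed
qed

lemma has_derivative_of_continuous_partials:
  fixes H :: "'v::euclidean_space \<Rightarrow> real"
  assumes der: "\<And>b q. b \<in> Basis \<Longrightarrow> ((\<lambda>s. H (q + s *\<^sub>R b)) has_real_derivative Db b q) (at 0)"
    and cont: "\<And>b. b \<in> Basis \<Longrightarrow> continuous_on UNIV (Db b)"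
  shows "(H has_derivative (\<lambda>h. \<Sum>b\<in>Basis. (h \<bullet> b) * Db b p)) (at p)"
  unfolding has_derivative_at_alt
proof (intro conjI allI impI)
  show "bounded_linear (\<lambda>h. \<Sum>b\<in>Basis. (h \<bullet> b) * Db b p)"
    by (intro bounded_linear_sum bounded_linear_mult_const bounded_linear_inner_left)
  fix e :: real assume "e > 0"
  define e' where "e' = e / real DIM('v)"
  have "e' > 0" using \<open>e > 0\<close> by (simp add: e'_def)
  have "\<forall>\<^sub>F q in nhds p. \<forall>b\<in>Basis. \<bar>Db b q - Db b p\<bar> < e'"
  proof (rule eventually_ball_finite[OF finite_Basis], intro ballI)
    fix b :: 'v assume "b \<in> Basis"
    then have "(Db b \<longlongrightarrow> Db b p) (nhds p)"
      using cont continuous_on_eq_continuous_at isCont_def tendsto_at_iff_tendsto_nhds by blast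
    from tendstoD[OF this \<open>e' > 0\<close>] show "\<forall>\<^sub>F q in nhds p. \<bar>Db b q - Db b p\<bar> < e'"
      by (simp add: dist_real_def)
  qed
  then obtain d where "d > 0" and d: "\<And>b q. b \<in> Basis \<Longrightarrow> dist q p < d \<Longrightarrow> \<bar>Db b q - Db b p\<bar> \<le> e'"
    unfolding eventually_nhds_metric by (metis less_le_not_le)
  show "\<exists>d>0. \<forall>y. norm (y - p) < d \<longrightarrow>
          norm (H y - H p - (\<Sum>b\<in>Basis. ((y - p) \<bullet> b) * Db b p)) \<le> e * norm (y - p)"
  proof (intro exI[of _ "d / real DIM('v)"] conjI allI impI)
    show "0 < d / real DIM('v)" using \<open>d > 0\<close> by simp
    fix y assume "norm (y - p) < d / real DIM('v)"
    then have "real DIM('v) * norm (y - p) < d" by (simp add: field_simps)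
    from partials_increment_bound[OF der d this order_refl]
    show "norm (H y - H p - (\<Sum>b\<in>Basis. ((y - p) \<bullet> b) * Db b p)) \<le> e * norm (y - p)"
      by (simp add: euclidean_representation e'_def)
  qed
qed

lemma mixed_partials_mean_value:
  fixes H :: "'v::real_normed_vector \<Rightarrow> real"
  assumes da: "\<And>q. ((\<lambda>s. H (q + s *\<^sub>R a)) has_real_derivative Da q) (at 0)"
   and db: "\<And>q. ((\<lambda>s. H (q + s *\<^sub>R b)) has_real_derivative Db q) (at 0)"
   and dab: "\<And>q. ((\<lambda>s. Db (q + s *\<^sub>R a)) has_real_derivative Dab q) (at 0)"
   and dba: "\<And>q. ((\<lambda>s. Da (q + s *\<^sub>R b)) has_real_derivative Dba q) (at 0)"
   and r: "r > 0"
  obtains s1 t1 s2 t2 where "s1 \<in> {0..r}" "t1 \<in> {0..r}" "s2 \<in> {0..r}" "t2 \<in> {0..r}"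
    and "Dba (p + s1 *\<^sub>R a + t1 *\<^sub>R b) = Dab (p + s2 *\<^sub>R a + t2 *\<^sub>R b)"
proof -
  define \<Delta> where "\<Delta> = H (p + r *\<^sub>R a + r *\<^sub>R b) - H (p + r *\<^sub>R a) - H (p + r *\<^sub>R b) + H p"
  define g where "g s = H ((p + r *\<^sub>R b) + s *\<^sub>R a) - H (p + s *\<^sub>R a)" for s
  have "\<And>x. 0 \<le> x \<Longrightarrow> x \<le> r \<Longrightarrow> (g has_real_derivative (Da ((p + r *\<^sub>R b) + x *\<^sub>R a) - Da (p + x *\<^sub>R a))) (at x)"
    unfolding g_def by (intro DERIV_diff has_real_derivative_along_line[where D=Da] da)
  from MVT2[OF r this] obtain s1 where s1: "0 < s1" "s1 < r"
    and g: "g r - g 0 = (r - 0) * (Da ((p + r *\<^sub>R b) + s1 *\<^sub>R a) - Da (p + s1 *\<^sub>R a))" by blast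
  define k where "k t = Da ((p + s1 *\<^sub>R a) + t *\<^sub>R b)" for t
  have "\<And>x. 0 \<le> x \<Longrightarrow> x \<le> r \<Longrightarrow> (k has_real_derivative Dba ((p + s1 *\<^sub>R a) + x *\<^sub>R b)) (at x)"
    unfolding k_def by (intro has_real_derivative_along_line[where D=Dba] dba)
  from MVT2[OF r this] obtain t1 where t1: "0 < t1" "t1 < r"
    and k: "k r - k 0 = (r - 0) * Dba ((p + s1 *\<^sub>R a) + t1 *\<^sub>R b)" by blast
  have "\<Delta> = g r - g 0" by (simp add: \<Delta>_def g_def algebra_simps)
  also have "\<dots> = r * (k r - k 0)" using g by (simp add: k_def algebra_simps)
  also have "\<dots> = r * r * Dba (p + s1 *\<^sub>R a + t1 *\<^sub>R b)" using k by simp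
  finally have \<Delta>1: "\<Delta> = r * r * Dba (p + s1 *\<^sub>R a + t1 *\<^sub>R b)" .
  define m where "m t = H ((p + r *\<^sub>R a) + t *\<^sub>R b) - H (p + t *\<^sub>R b)" for t
  have "\<And>x. 0 \<le> x \<Longrightarrow> x \<le> r \<Longrightarrow> (m has_real_derivative (Db ((p + r *\<^sub>R a) + x *\<^sub>R b) - Db (p + x *\<^sub>R b))) (at x)"
    unfolding m_def by (intro DERIV_diff has_real_derivative_along_line[where D=Db] db)
  from MVT2[OF r this] obtain t2 where t2: "0 < t2" "t2 < r"
    and m: "m r - m 0 = (r - 0) * (Db ((p + r *\<^sub>R a) + t2 *\<^sub>R b) - Db (p + t2 *\<^sub>R b))" by blast
  define n where "n s = Db ((p + t2 *\<^sub>R b) + s *\<^sub>R a)" for s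
  have "\<And>x. 0 \<le> x \<Longrightarrow> x \<le> r \<Longrightarrow> (n has_real_derivative Dab ((p + t2 *\<^sub>R b) + x *\<^sub>R a)) (at x)"
    unfolding n_def by (intro has_real_derivative_along_line[where D=Dab] dab)
  from MVT2[OF r this] obtain s2 where s2: "0 < s2" "s2 < r"
    and n: "n r - n 0 = (r - 0) * Dab ((p + t2 *\<^sub>R b) + s2 *\<^sub>R a)" by blast
  have "\<Delta> = m r - m 0" by (simp add: \<Delta>_def m_def algebra_simps)
  also have "\<dots> = r * (n r - n 0)" using m by (simp add: n_def algebra_simps)
  also have "\<dots> = r * r * Dab (p + s2 *\<^sub>R a + t2 *\<^sub>R b)" using n by (simp add: algebra_simps)
  finally have "\<Delta> = r * r * Dab (p + s2 *\<^sub>R a + t2 *\<^sub>R b)" .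
  with \<Delta>1 r have "Dba (p + s1 *\<^sub>R a + t1 *\<^sub>R b) = Dab (p + s2 *\<^sub>R a + t2 *\<^sub>R b)" by simp
  with s1 t1 s2 t2 show ?thesis by (intro that) auto
qed

lemma mixed_partials_commute:
  fixes H :: "'v::real_normed_vector \<Rightarrow> real"
  assumes da: "\<And>q. ((\<lambda>s. H (q + s *\<^sub>R a)) has_real_derivative Da q) (at 0)"
   and db: "\<And>q. ((\<lambda>s. H (q + s *\<^sub>R b)) has_real_derivative Db q) (at 0)"
   and dab: "\<And>q. ((\<lambda>s. Db (q + s *\<^sub>R a)) has_real_derivative Dab q) (at 0)"
   and dba: "\<And>q. ((\<lambda>s. Da (q + s *\<^sub>R b)) has_real_derivative Dba q) (at 0)"
   and cab: "continuous_on UNIV Dab" and cba: "continuous_on UNIV Dba"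
  shows "Dab p = Dba p"
proof (rule ccontr)
  assume ne: "Dab p \<noteq> Dba p"
  define \<epsilon> where "\<epsilon> = \<bar>Dab p - Dba p\<bar> / 2"
  have \<epsilon>: "\<epsilon> > 0" using ne by (simp add: \<epsilon>_def)
  obtain d1 where d1: "d1 > 0" "\<And>q. dist q p < d1 \<Longrightarrow> \<bar>Dab q - Dab p\<bar> < \<epsilon>"
    using cab \<epsilon> unfolding continuous_on_iff dist_real_def by blast
  obtain d2 where d2: "d2 > 0" "\<And>q. dist q p < d2 \<Longrightarrow> \<bar>Dba q - Dba p\<bar> < \<epsilon>"
    using cba \<epsilon> unfolding continuous_on_iff dist_real_def by blast
  define r where "r = min d1 d2 / (2 * (norm a + norm b + 1))"
  have den: "norm a + norm b + 1 > 0" using norm_ge_zero[of a] norm_ge_zero[of b] by linarith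
  have r: "r > 0" using d1 d2 den by (simp add: r_def)
  have rab: "r * (norm a + norm b) < min d1 d2"
  proof -
    have "r * (norm a + norm b) \<le> r * (norm a + norm b + 1)" using r by simp
    also have "\<dots> = min d1 d2 / 2" unfolding r_def using den by (simp add: field_simps)
    also have "\<dots> < min d1 d2" using d1 d2 by (simp add: min_def)
    finally show ?thesis .
  qed
  have near: "dist (p + s *\<^sub>R a + t *\<^sub>R b) p < min d1 d2" if "s \<in> {0..r}" "t \<in> {0..r}" for s t
  proof -
    have "dist (p + s *\<^sub>R a + t *\<^sub>R b) p \<le> \<bar>s\<bar> * norm a + \<bar>t\<bar> * norm b"
      by (simp add: dist_norm norm_triangle_le)
    also have "\<dots> \<le> r * norm a + r * norm b"
      using that by (intro add_mono mult_right_mono) auto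
    finally show ?thesis using rab by (simp add: algebra_simps)
  qed
  obtain s1 t1 s2 t2 where st: "s1 \<in> {0..r}" "t1 \<in> {0..r}" "s2 \<in> {0..r}" "t2 \<in> {0..r}"
    and eq: "Dba (p + s1 *\<^sub>R a + t1 *\<^sub>R b) = Dab (p + s2 *\<^sub>R a + t2 *\<^sub>R b)"
    using mixed_partials_mean_value[OF da db dab dba r] .
  have "\<bar>Dab (p + s2 *\<^sub>R a + t2 *\<^sub>R b) - Dab p\<bar> < \<epsilon>" using d1(2) near[OF st(3,4)] by simp
  moreover have "\<bar>Dba (p + s1 *\<^sub>R a + t1 *\<^sub>R b) - Dba p\<bar> < \<epsilon>" using d2(2) near[OF st(1,2)] by simp
  ultimately show False using eq unfolding \<epsilon>_def by (auto simp: abs_if split: if_split_asm)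
qed

definition C1 :: "('v::euclidean_space \<Rightarrow> real) \<Rightarrow> bool" where
  "C1 F \<longleftrightarrow> (\<forall>b\<in>Basis. \<forall>p. ((\<lambda>s. F (p + s *\<^sub>R b)) has_real_derivative dd b F p) (at 0)) \<and>
     (\<forall>b\<in>Basis. continuous_on UNIV (dd b F))"

lemma C2_imp_C1: "C2 F \<Longrightarrow> C1 F"
  unfolding C2_def C1_def by blast

lemma C2_imp_C1_dd: "C2 F \<Longrightarrow> e \<in> Basis \<Longrightarrow> C1 (dd e F)"
  unfolding C2_def C1_def by blast

lemma C2_has_partial:
  "C2 F \<Longrightarrow> b \<in> Basis \<Longrightarrow> ((\<lambda>s. F (p + s *\<^sub>R b)) has_real_derivative dd b F p) (at 0)"
  unfolding C2_def by blast

lemma C2_has_second_partial: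
  "C2 F \<Longrightarrow> b \<in> Basis \<Longrightarrow> e \<in> Basis \<Longrightarrow>
   ((\<lambda>s. dd e F (p + s *\<^sub>R b)) has_real_derivative dd b (dd e F) p) (at 0)"
  unfolding C2_def by blast

lemma C1_has_derivative:
  fixes F :: "'v::euclidean_space \<Rightarrow> real"
  assumes "C1 F"
  obtains D where "(F has_derivative D) (at p)" and "\<And>b. b \<in> Basis \<Longrightarrow> D b = dd b F p"
proof
  show "(F has_derivative (\<lambda>h. \<Sum>b\<in>Basis. (h \<bullet> b) * dd b F p)) (at p)"
    using assms unfolding C1_def by (intro has_derivative_of_continuous_partials) auto
  show "(\<Sum>b'\<in>Basis. (b \<bullet> b') * dd b' F p) = dd b F p" if "b \<in> Basis" for b
  proof -
    have "(\<Sum>b'\<in>Basis. (b \<bullet> b') * dd b' F p) = (\<Sum>b'\<in>Basis. if b' = b then dd b' F p else 0)"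
      using that by (intro sum.cong) (auto simp: inner_Basis)
    then show ?thesis using that by simp
  qed
qed

lemma axis_zero_in_Basis_prod [simp]: "(axis i (1::real), 0::real) \<in> (Basis :: ((real^'n::finite) \<times> real) set)"
  by (simp add: Basis_prod_def)

lemma zero_one_in_Basis_prod [simp]: "(0, 1::real) \<in> (Basis :: ((real^'n::finite) \<times> real) set)"
  by (simp add: Basis_prod_def)

section \<open>Chain rule for \<open>x \<mapsto> E(x, P(x))\<close>\<close>

lemma graph_has_real_derivative:
  fixes F :: "(real^'n::finite) \<times> real \<Rightarrow> real" and P :: "real^'n \<Rightarrow> real"
  assumes F: "C1 F" and P: "((\<lambda>s. P (x + s *\<^sub>R axis i 1)) has_real_derivative dP) (at 0)"
  shows "((\<lambda>s. F (x + s *\<^sub>R axis i 1, P (x + s *\<^sub>R axis i 1))) has_real_derivative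
           dd (axis i 1, 0) F (x, P x) + dP * dd (0, 1) F (x, P x)) (at 0)"
proof -
  obtain D where D: "(F has_derivative D) (at (x, P x))" and Db: "\<And>b. b \<in> Basis \<Longrightarrow> D b = dd b F (x, P x)"
    using C1_has_derivative[OF F] by blast
  have "((\<lambda>s. x + s *\<^sub>R axis i 1) has_vector_derivative axis i 1) (at 0)"
    by (auto intro!: derivative_eq_intros simp: has_vector_derivative_def)
  moreover have "((\<lambda>s. P (x + s *\<^sub>R axis i 1)) has_vector_derivative dP) (at 0)"
    using P by (simp add: has_real_derivative_iff_has_vector_derivative)
  ultimately have curve: "((\<lambda>s. (x + s *\<^sub>R axis i 1, P (x + s *\<^sub>R axis i 1))) has_vector_derivative (axis i 1, dP)) (at 0)"
    by (rule has_vector_derivative_Pair)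
  have D_within: "(F has_derivative D)
      (at ((\<lambda>s. (x + s *\<^sub>R axis i 1, P (x + s *\<^sub>R axis i 1))) 0)
       within range (\<lambda>s. (x + s *\<^sub>R axis i 1, P (x + s *\<^sub>R axis i 1))))"
    using D by (auto intro: has_derivative_at_withinI)
  have "((\<lambda>s. F (x + s *\<^sub>R axis i 1, P (x + s *\<^sub>R axis i 1))) has_vector_derivative D (axis i 1, dP)) (at 0)"
    using vector_derivative_diff_chain_within[OF curve D_within] by (simp add: o_def)
  moreover have "D (axis i 1, dP) = D (axis i 1, 0) + dP *\<^sub>R D (0, 1)"
  proof -
    have lin: "linear D" using D by (rule has_derivative_linear)
    have "D (axis i 1, dP) = D ((axis i (1::real), 0::real) + dP *\<^sub>R (0, 1))" by simp
    also have "\<dots> = D (axis i 1, 0) + dP *\<^sub>R D (0, 1)"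
      by (simp only: linear_add[OF lin] real_vector.linear_scale[OF lin])
    finally show ?thesis .
  qed
  ultimately show ?thesis
    by (simp add: Db has_real_derivative_iff_has_vector_derivative)
qed

lemma pd_graph:
  fixes F :: "(real^'n::finite) \<times> real \<Rightarrow> real" and P :: "real^'n \<Rightarrow> real"
  assumes "C1 F" "C2 P"
  shows "pd i (\<lambda>x. F (x, P x)) x = dd (axis i 1, 0) F (x, P x) + pd i P x * dd (0, 1) F (x, P x)"
  unfolding pd_def dd_def[of "axis i 1" "\<lambda>x. F (x, P x)"]
  by (rule DERIV_imp_deriv, rule graph_has_real_derivative[OF assms(1) C2_has_partial[OF assms(2)]]) simp

lemma pd_pd_graph:
  fixes F :: "(real^'n::finite) \<times> real \<Rightarrow> real" and P :: "real^'n \<Rightarrow> real"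
  assumes F: "C2 F" and P: "C2 P"
  shows "pd i (pd j (\<lambda>x. F (x, P x))) x =
     dd (axis i 1, 0) (dd (axis j 1, 0) F) (x, P x) + pd i P x * dd (0, 1) (dd (axis j 1, 0) F) (x, P x)
     + pd i (pd j P) x * dd (0, 1) F (x, P x)
     + pd j P x * (dd (axis i 1, 0) (dd (0, 1) F) (x, P x) + pd i P x * dd (0, 1) (dd (0, 1) F) (x, P x))"
proof -
  have pd_j: "pd j (\<lambda>x. F (x, P x)) = (\<lambda>x. dd (axis j 1, 0) F (x, P x) + pd j P x * dd (0, 1) F (x, P x))"
    using pd_graph[OF C2_imp_C1[OF F] P] by blast
  have P_i: "((\<lambda>s. P (x + s *\<^sub>R axis i 1)) has_real_derivative pd i P x) (at 0)"
    and P_ij: "((\<lambda>s. pd j P (x + s *\<^sub>R axis i 1)) has_real_derivative pd i (pd j P) x) (at 0)"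
    using C2_has_partial[OF P] C2_has_second_partial[OF P] by (simp_all add: pd_def[abs_def])
  note F_j = graph_has_real_derivative[OF C2_imp_C1_dd[OF F axis_zero_in_Basis_prod] P_i]
   and F_y = graph_has_real_derivative[OF C2_imp_C1_dd[OF F zero_one_in_Basis_prod] P_i]
  have "((\<lambda>s. pd j (\<lambda>x. F (x, P x)) (x + s *\<^sub>R axis i 1)) has_real_derivative
          (dd (axis i 1, 0) (dd (axis j 1, 0) F) (x, P x) + pd i P x * dd (0, 1) (dd (axis j 1, 0) F) (x, P x))
          + (pd i (pd j P) x * dd (0, 1) F (x, P x) + pd j P x *
             (dd (axis i 1, 0) (dd (0, 1) F) (x, P x) + pd i P x * dd (0, 1) (dd (0, 1) F) (x, P x)))) (at 0)"
    unfolding pd_j by (rule DERIV_cong[OF DERIV_add[OF F_j DERIV_mult[OF P_ij F_y]]]) (simp add: algebra_simps)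
  from DERIV_imp_deriv[OF this] show ?thesis
    by (simp add: pd_def[of i "pd j (\<lambda>x. F (x, P x))"] dd_def algebra_simps)
qed

lemma dd_snd_fst_commute:
  fixes F :: "(real^'n::finite) \<times> real \<Rightarrow> real"
  assumes F: "C2 F"
  shows "dd (0, 1) (dd (axis j 1, 0) F) p = dd (axis j 1, 0) (dd (0, 1) F) p"
proof (rule mixed_partials_commute[where H=F and a="(0, 1)" and b="(axis j 1, 0)"
      and Da="dd (0, 1) F" and Db="dd (axis j 1, 0) F"])
  show "continuous_on UNIV (dd (0, 1) (dd (axis j 1, 0) F))"
    and "continuous_on UNIV (dd (axis j 1, 0) (dd (0, 1) F))"
    using F unfolding C2_def by auto
qed (rule C2_has_partial[OF F] C2_has_second_partial[OF F]; simp)+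

lemma deriv_snd_section:
  fixes G :: "(real^'n::finite) \<times> real \<Rightarrow> real"
  assumes "\<And>q. ((\<lambda>s. G (q + s *\<^sub>R (0, 1))) has_real_derivative D q) (at 0)"
  shows "deriv (\<lambda>y'. G (x, y')) y = D (x, y)"
proof -
  have "((\<lambda>y'. G (x, y')) has_real_derivative D (x, y)) (at (0 + y))"
    using DERIV_shift[of "\<lambda>y'. G (x, y')" "D (x, y)" 0 y] assms[of "(x, y)"] by (simp add: add.commute)
  then show ?thesis by (intro DERIV_imp_deriv) simp
qed

lemma inner_transpose_mult_vec:
  fixes A :: "real^'d::finite^'n::finite"
  shows "(transpose A *v u) \<bullet> (transpose A *v w) =
           (\<Sum>i\<in>UNIV. \<Sum>j\<in>UNIV. (A ** transpose A) $ i $ j * (u $ i * w $ j))"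
proof -
  have "(transpose A *v u) \<bullet> (transpose A *v w) =
          (\<Sum>k\<in>UNIV. (\<Sum>i\<in>UNIV. A $ i $ k * u $ i) * (\<Sum>j\<in>UNIV. A $ j $ k * w $ j))"
    by (simp add: inner_vec_def matrix_vector_mult_def transpose_def mult.commute)
  also have "\<dots> = (\<Sum>k\<in>UNIV. \<Sum>i\<in>UNIV. \<Sum>j\<in>UNIV. A $ i $ k * A $ j $ k * (u $ i * w $ j))"
    by (simp add: sum_product algebra_simps)
  also have "\<dots> = (\<Sum>i\<in>UNIV. \<Sum>j\<in>UNIV. \<Sum>k\<in>UNIV. A $ i $ k * A $ j $ k * (u $ i * w $ j))"
    by (subst sum.swap) (intro sum.cong refl sum.swap)
  also have "\<dots> = (\<Sum>i\<in>UNIV. \<Sum>j\<in>UNIV. (A ** transpose A) $ i $ j * (u $ i * w $ j))"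
    by (simp add: matrix_matrix_mult_def transpose_def sum_distrib_right)
  finally show ?thesis .
qed

text \<open>Read \<open>PsiA\<close>, \<open>PsiB\<close> as the first and second partials of \<open>x \<mapsto> E(x, P(x))\<close>;
  \<open>GA\<close>, \<open>GB\<close> as those of \<open>E(\<cdot>, y)\<close>, \<open>X\<close> as \<open>D\<^sub>xD\<^sub>yE\<close>, \<open>c\<close>, \<open>cc\<close> as \<open>D\<^sub>yE\<close>, \<open>D\<^sub>y\<^sub>yE\<close>;
  \<open>PA\<close>, \<open>PB\<close> as those of \<open>P\<close>. Symmetry of \<open>A A\<^sup>T\<close> merges the two cross terms.\<close>
lemma diffusion_operator_chain_algebra:
  fixes A :: "real^'d::finite^'n::finite" and v :: "real^'n"
  assumes PsiA: "\<And>i. PsiA i = GA i + c * PA i"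
    and PsiB: "\<And>i j. PsiB i j = GB i j + PA i * X j + PB i j * c + PA j * (X i + PA i * cc)"
  shows "(1/2) * (\<Sum>i\<in>UNIV. \<Sum>j\<in>UNIV. (A ** transpose A) $ i $ j * PsiB i j) + (\<Sum>i\<in>UNIV. v $ i * PsiA i)
       = ((1/2) * (\<Sum>i\<in>UNIV. \<Sum>j\<in>UNIV. (A ** transpose A) $ i $ j * GB i j) + (\<Sum>i\<in>UNIV. v $ i * GA i))
         + c * ((1/2) * (\<Sum>i\<in>UNIV. \<Sum>j\<in>UNIV. (A ** transpose A) $ i $ j * PB i j) + (\<Sum>i\<in>UNIV. v $ i * PA i))
         + (transpose A *v (\<chi> i. X i)) \<bullet> (transpose A *v (\<chi> i. PA i))
         + cc / 2 * (norm (transpose A *v (\<chi> i. PA i)))\<^sup>2"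
proof -
  define a where "a i j = (A ** transpose A) $ i $ j" for i j
  have sym: "a i j = a j i" for i j
    unfolding a_def by (simp add: matrix_matrix_mult_def transpose_def mult.commute)
  have swap: "(\<Sum>i\<in>UNIV. \<Sum>j\<in>UNIV. a i j * (PA i * X j)) = (\<Sum>i\<in>UNIV. \<Sum>j\<in>UNIV. a i j * (X i * PA j))"
    by (subst sum.swap) (simp add: sym mult.commute)
  have q1: "(transpose A *v (\<chi> i. X i)) \<bullet> (transpose A *v (\<chi> i. PA i)) = (\<Sum>i\<in>UNIV. \<Sum>j\<in>UNIV. a i j * (X i * PA j))"
    unfolding inner_transpose_mult_vec a_def by simp
  have q2: "(norm (transpose A *v (\<chi> i. PA i)))\<^sup>2 = (\<Sum>i\<in>UNIV. \<Sum>j\<in>UNIV. a i j * (PA i * PA j))"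
    unfolding power2_norm_eq_inner inner_transpose_mult_vec a_def by simp
  have "(\<Sum>i\<in>UNIV. \<Sum>j\<in>UNIV. a i j * PsiB i j)
      = (\<Sum>i\<in>UNIV. \<Sum>j\<in>UNIV. a i j * GB i j) + (\<Sum>i\<in>UNIV. \<Sum>j\<in>UNIV. a i j * (PA i * X j))
        + c * (\<Sum>i\<in>UNIV. \<Sum>j\<in>UNIV. a i j * PB i j) + (\<Sum>i\<in>UNIV. \<Sum>j\<in>UNIV. a i j * (X i * PA j))
        + cc * (\<Sum>i\<in>UNIV. \<Sum>j\<in>UNIV. a i j * (PA i * PA j))"
    by (simp add: PsiB sum.distrib sum_distrib_left algebra_simps)
  moreover have "(\<Sum>i\<in>UNIV. v $ i * PsiA i) = (\<Sum>i\<in>UNIV. v $ i * GA i) + c * (\<Sum>i\<in>UNIV. v $ i * PA i)"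
    by (simp add: PsiA sum.distrib sum_distrib_left algebra_simps)
  ultimately show ?thesis
    unfolding a_def[symmetric] q1 q2 swap by (simp add: algebra_simps)
qed

lemma dd_case_prod_partials:
  fixes E :: "real^'n::finite \<Rightarrow> real \<Rightarrow> real"
  assumes E: "C2 (\<lambda>(x,y). E x y)"
  shows "dd (axis i 1, 0) (\<lambda>(x,y). E x y) (x, y) = pd i (\<lambda>x'. E x' y) x"
    and "dd (0, 1) (\<lambda>(x,y). E x y) (x, y) = deriv (\<lambda>y'. E x y') y"
    and "dd (axis i 1, 0) (dd (axis j 1, 0) (\<lambda>(x,y). E x y)) (x, y) = pd i (pd j (\<lambda>x'. E x' y)) x"
    and "dd (axis i 1, 0) (dd (0, 1) (\<lambda>(x,y). E x y)) (x, y) = pd i (\<lambda>x'. deriv (\<lambda>y'. E x' y') y) x"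
    and "dd (0, 1) (dd (0, 1) (\<lambda>(x,y). E x y)) (x, y) = deriv (\<lambda>y'. deriv (\<lambda>y''. E x y'') y') y"
proof -
  have dy: "dd (0, 1) (\<lambda>(x,y). E x y) (x', y') = deriv (\<lambda>y''. E x' y'') y'" for x' y'
    using deriv_snd_section[OF C2_has_partial[OF E zero_one_in_Basis_prod]] by simp
  show "dd (axis i 1, 0) (\<lambda>(x,y). E x y) (x, y) = pd i (\<lambda>x'. E x' y) x"
    and "dd (axis i 1, 0) (dd (axis j 1, 0) (\<lambda>(x,y). E x y)) (x, y) = pd i (pd j (\<lambda>x'. E x' y)) x"
    by (simp_all add: pd_def dd_def)
  show "dd (0, 1) (\<lambda>(x,y). E x y) (x, y) = deriv (\<lambda>y'. E x y') y" by (rule dy)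
  show "dd (axis i 1, 0) (dd (0, 1) (\<lambda>(x,y). E x y)) (x, y) = pd i (\<lambda>x'. deriv (\<lambda>y'. E x' y') y) x"
    by (simp add: dd_def pd_def dy[symmetric])
  have "deriv (\<lambda>y'. dd (0, 1) (\<lambda>(x,y). E x y) (x, y')) y = dd (0, 1) (dd (0, 1) (\<lambda>(x,y). E x y)) (x, y)"
    by (rule deriv_snd_section, rule C2_has_second_partial[OF E]) simp_all
  then show "dd (0, 1) (dd (0, 1) (\<lambda>(x,y). E x y)) (x, y) = deriv (\<lambda>y'. deriv (\<lambda>y''. E x y'') y') y"
    by (simp add: dy)
qed

lemma pd_comp_graph:
  fixes E :: "real^'n::finite \<Rightarrow> real \<Rightarrow> real"
  assumes E: "C2 (\<lambda>(x,y). E x y)" and P: "C2 P"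
  shows "pd i (\<lambda>x. E x (P x)) x = pd i (\<lambda>x'. E x' (P x)) x + deriv (\<lambda>y. E x y) (P x) * pd i P x"
  using pd_graph[OF C2_imp_C1[OF E] P, of i x] by (simp add: dd_case_prod_partials[OF E])

lemma pd_pd_comp_graph:
  fixes E :: "real^'n::finite \<Rightarrow> real \<Rightarrow> real"
  assumes E: "C2 (\<lambda>(x,y). E x y)" and P: "C2 P"
  shows "pd i (pd j (\<lambda>x. E x (P x))) x = pd i (pd j (\<lambda>x'. E x' (P x))) x
       + pd i P x * pd j (\<lambda>x'. deriv (\<lambda>y. E x' y) (P x)) x
       + pd i (pd j P) x * deriv (\<lambda>y. E x y) (P x)
       + pd j P x * (pd i (\<lambda>x'. deriv (\<lambda>y. E x' y) (P x)) x
                     + pd i P x * deriv (\<lambda>y. deriv (\<lambda>y'. E x y') y) (P x))"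
  using pd_pd_graph[OF E P, of i j x]
  by (simp add: dd_case_prod_partials[OF E] dd_snd_fst_commute[OF E])

lemma grad_comp_graph:
  fixes E :: "real^'n::finite \<Rightarrow> real \<Rightarrow> real"
  assumes E: "C2 (\<lambda>(x,y). E x y)" and P: "C2 P"
  shows "grad (\<lambda>x. E x (P x)) x = grad (\<lambda>x'. E x' (P x)) x + deriv (\<lambda>y. E x y) (P x) *\<^sub>R grad P x"
  unfolding grad_def by (simp add: vec_eq_iff pd_comp_graph[OF E P])

lemma Lop_comp_graph:
  fixes E :: "real^'n::finite \<Rightarrow> real \<Rightarrow> real"
  assumes E: "C2 (\<lambda>(x,y). E x y)" and P: "C2 P"
  shows "Lop \<sigma> b (\<lambda>x. E x (P x)) x = Lop \<sigma> b (\<lambda>x'. E x' (P x)) x + deriv (\<lambda>y. E x y) (P x) * Lop \<sigma> b P x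
          + sigDx \<sigma> (\<lambda>x'. deriv (\<lambda>y. E x' y) (P x)) x \<bullet> sigDx \<sigma> P x
          + deriv (\<lambda>y. deriv (\<lambda>y'. E x y') y) (P x) / 2 * (norm (sigDx \<sigma> P x))\<^sup>2"
  unfolding Lop_def sigDx_def grad_def
  by (rule diffusion_operator_chain_algebra, rule pd_comp_graph[OF E P], rule pd_pd_comp_graph[OF E P])

section \<open>Inverting the flow in \<open>y\<close>\<close>

lemma bij_strict_mono_inv:
  fixes e :: "'a::linorder \<Rightarrow> 'b::linorder"
  assumes "bij e" "strict_mono e"
  shows "e (inv e y) = y"
    and "inv e y \<le> a \<longleftrightarrow> y \<le> e a" and "a \<le> inv e y \<longleftrightarrow> e a \<le> y"
    and "inv e y < a \<longleftrightarrow> y < e a" and "a < inv e y \<longleftrightarrow> e a < y"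
proof -
  show e_inv: "e (inv e y) = y" using assms(1) by (simp add: bij_is_surj surj_f_inv_f)
  show "inv e y \<le> a \<longleftrightarrow> y \<le> e a" "a \<le> inv e y \<longleftrightarrow> e a \<le> y"
    using strict_mono_less_eq[OF assms(2)] e_inv by metis+
  show "inv e y < a \<longleftrightarrow> y < e a" "a < inv e y \<longleftrightarrow> e a < y"
    using strict_mono_less[OF assms(2)] e_inv by metis+
qed

lemma continuous_on_inv_family:
  fixes E :: "real \<Rightarrow> 'b::metric_space \<Rightarrow> real \<Rightarrow> real"
  assumes cont: "continuous_on (S \<times> UNIV \<times> UNIV) (\<lambda>(t,x,y). E t x y)"
    and mono: "\<And>t x. t \<in> S \<Longrightarrow> bij (E t x) \<and> strict_mono (E t x)"
  shows "continuous_on (S \<times> UNIV \<times> UNIV) (\<lambda>(t,x,y). inv (E t x) y)"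
  unfolding continuous_on_def
proof (intro ballI tendstoI)
  fix p0 :: "real \<times> 'b \<times> real" and e :: real
  assume p0: "p0 \<in> S \<times> UNIV \<times> UNIV" and "e > 0"
  obtain t0 x0 y0 where p0_eq: "p0 = (t0, x0, y0)" and "t0 \<in> S" using p0 by auto
  define v0 where "v0 = inv (E t0 x0) y0"
  let ?F = "at p0 within S \<times> UNIV \<times> UNIV"
  have E_at: "((\<lambda>(t,x,y). E t x v - y) \<longlongrightarrow> E t0 x0 v - y0) ?F" for v
  proof -
    have "continuous_on (S \<times> UNIV \<times> UNIV) (\<lambda>q. (\<lambda>(t,x,y). E t x y) (fst q, fst (snd q), v))"
      by (rule continuous_on_compose2[OF cont]) (auto intro!: continuous_intros)
    then have "continuous_on (S \<times> UNIV \<times> UNIV)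
        (\<lambda>q. (\<lambda>(t,x,y). E t x y) (fst q, fst (snd q), v) - snd (snd q))"
      by (intro continuous_on_diff continuous_intros)
    then have "continuous_on (S \<times> UNIV \<times> UNIV) (\<lambda>(t,x,y). E t x v - y)"
      by (simp add: case_prod_beta')
    then show ?thesis using p0 unfolding continuous_on_def p0_eq by auto
  qed
  note inv0 = bij_strict_mono_inv[OF mono[OF \<open>t0 \<in> S\<close>, of x0, THEN conjunct1] mono[OF \<open>t0 \<in> S\<close>, of x0, THEN conjunct2]]
  have "E t0 x0 (v0 - e) < y0" "y0 < E t0 x0 (v0 + e)"
    using inv0(5)[of "v0 - e" y0] inv0(4)[of y0 "v0 + e"] \<open>e > 0\<close> by (auto simp: v0_def)
  then have "\<forall>\<^sub>F q in ?F. (\<lambda>(t,x,y). E t x (v0 - e) - y) q < 0"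
    and "\<forall>\<^sub>F q in ?F. 0 < (\<lambda>(t,x,y). E t x (v0 + e) - y) q"
    using order_tendstoD(2)[OF E_at[of "v0 - e"], of 0] order_tendstoD(1)[OF E_at[of "v0 + e"], of 0]
    by simp_all
  moreover have "\<forall>\<^sub>F q in ?F. q \<in> S \<times> UNIV \<times> UNIV" by (simp add: eventually_at_filter)
  ultimately show "\<forall>\<^sub>F q in ?F. dist ((\<lambda>(t,x,y). inv (E t x) y) q) ((\<lambda>(t,x,y). inv (E t x) y) p0) < e"
  proof eventually_elim
    case (elim q)
    obtain t x y where q: "q = (t, x, y)" and "t \<in> S" using elim by (cases q) auto
    note inv = bij_strict_mono_inv[OF mono[OF \<open>t \<in> S\<close>, of x, THEN conjunct1] mono[OF \<open>t \<in> S\<close>, of x, THEN conjunct2]]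
    have "v0 - e < inv (E t x) y" "inv (E t x) y < v0 + e"
      using elim inv(4)[of y "v0 + e"] inv(5)[of "v0 - e" y] by (auto simp: q)
    then show ?case by (simp add: q p0_eq v0_def[symmetric] dist_real_def abs_less_iff)
  qed
qed

lemma borel_measurable_inv_comp:
  fixes E :: "'a \<Rightarrow> real \<Rightarrow> real"
  assumes U: "U \<in> borel_measurable N" and E: "\<And>a. (\<lambda>w. E w a) \<in> borel_measurable N"
    and mono: "\<And>w. w \<in> space N \<Longrightarrow> bij (E w) \<and> strict_mono (E w)"
  shows "(\<lambda>w. inv (E w) (U w)) \<in> borel_measurable N"
proof (rule borel_measurableI_le)
  fix a :: real
  have "{w \<in> space N. inv (E w) (U w) \<le> a} = {w \<in> space N. U w \<le> E w a}"
    using bij_strict_mono_inv(2) mono by blast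
  also have "\<dots> \<in> sets N" by (rule borel_measurable_le[OF U E])
  finally show "{w \<in> space N. inv (E w) (U w) \<le> a} \<in> sets N" .
qed

lemma CFB_inv_flow:
  fixes \<eta> :: "'a \<Rightarrow> real \<Rightarrow> real^'n::finite \<Rightarrow> real \<Rightarrow> real" and u :: "'a \<Rightarrow> real \<Rightarrow> real^'n \<Rightarrow> real"
    and B :: "real \<Rightarrow> 'a \<Rightarrow> real^'d::finite"
  assumes mono: "\<forall>\<omega>\<in>space M. \<forall>t\<in>{0..T}. \<forall>x. bij (\<eta> \<omega> t x) \<and> strict_mono (\<eta> \<omega> t x)"
    and cont: "\<forall>\<omega>\<in>space M. continuous_on ({0..T} \<times> UNIV \<times> UNIV) (\<lambda>(t,x,y). \<eta> \<omega> t x y)"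
    and meas: "(\<lambda>(\<omega>,(t,x,y)). \<eta> \<omega> t x y) \<in> borel_measurable (FB M B T 0 \<Otimes>\<^sub>M borel)"
    and prog: "\<forall>t\<in>{0..T}. \<forall>x. (\<lambda>(s,(\<omega>,y)). \<eta> \<omega> s x y)
                     \<in> borel_measurable (restrict_space borel {t..T} \<Otimes>\<^sub>M (FB M B T t \<Otimes>\<^sub>M borel))"
    and u: "CFB M B T Gb u"
  shows "CFB M B T Gb (\<lambda>\<omega> t x. eps \<eta> \<omega> t x (u \<omega> t x))"
  unfolding CFB_def
proof (intro conjI ballI)
  fix \<omega> assume \<omega>: "\<omega> \<in> space M"
  have "continuous_on ({0..T} \<times> UNIV \<times> UNIV) (\<lambda>(t,x,y). inv (\<eta> \<omega> t x) y)"
    using cont mono \<omega> by (intro continuous_on_inv_family) auto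
  moreover have "continuous_on ({0..T} \<times> Gb) (\<lambda>q. (fst q, snd q, u \<omega> (fst q) (snd q)))"
    using u \<omega> unfolding CFB_def by (auto simp: case_prod_beta' intro!: continuous_intros)
  ultimately have "continuous_on ({0..T} \<times> Gb)
      (\<lambda>q. (\<lambda>(t,x,y). inv (\<eta> \<omega> t x) y) (fst q, snd q, u \<omega> (fst q) (snd q)))"
    by (rule continuous_on_compose2) auto
  then show "continuous_on ({0..T} \<times> Gb) (\<lambda>(t,x). eps \<eta> \<omega> t x (u \<omega> t x))"
    by (simp add: eps_def case_prod_beta')
next
  let ?N = "FB M B T 0 \<Otimes>\<^sub>M restrict_space borel ({0..T} \<times> Gb)"
  have "(\<lambda>w. \<eta> (fst w) (fst (snd w)) (snd (snd w)) a) \<in> borel_measurable ?N" for a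
  proof -
    have "(\<lambda>q::real \<times> (real^'n). (fst q, snd q, a)) \<in> restrict_space borel ({0..T} \<times> Gb) \<rightarrow>\<^sub>M borel"
      by (intro measurable_restrict_space1 borel_measurable_continuous_onI continuous_intros)
    then have "(\<lambda>w. (fst w, (fst (snd w), snd (snd w), a))) \<in> ?N \<rightarrow>\<^sub>M FB M B T 0 \<Otimes>\<^sub>M borel"
      by (intro measurable_Pair measurable_fst measurable_compose[OF measurable_snd])
    from measurable_compose[OF this meas] show ?thesis by (simp add: case_prod_beta')
  qed
  moreover have "w \<in> space ?N \<Longrightarrow> fst w \<in> space M \<and> fst (snd w) \<in> {0..T}" for w
    by (auto simp: space_pair_measure space_restrict_space FB_def space_measure_of_conv)
  ultimately have "(\<lambda>w. inv (\<eta> (fst w) (fst (snd w)) (snd (snd w))) (u (fst w) (fst (snd w)) (snd (snd w))))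
      \<in> borel_measurable ?N"
    using u mono unfolding CFB_def by (intro borel_measurable_inv_comp) (auto simp: case_prod_beta')
  then show "(\<lambda>(\<omega>,(t,x)). eps \<eta> \<omega> t x (u \<omega> t x)) \<in> borel_measurable ?N"
    by (simp add: eps_def case_prod_beta')
next
  fix x t assume x: "x \<in> Gb" and t: "t \<in> {0..T}"
  let ?N = "restrict_space borel {t..T} \<Otimes>\<^sub>M FB M B T t"
  have "(\<lambda>w. \<eta> (snd w) (fst w) x a) \<in> borel_measurable ?N" for a
  proof -
    have "(\<lambda>w. (fst w, (snd w, a))) \<in> ?N \<rightarrow>\<^sub>M restrict_space borel {t..T} \<Otimes>\<^sub>M (FB M B T t \<Otimes>\<^sub>M borel)"
      by (intro measurable_Pair measurable_fst measurable_snd measurable_const) simp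
    from measurable_compose[OF this prog[rule_format, OF t, of x]] show ?thesis
      by (simp add: case_prod_beta')
  qed
  moreover have "w \<in> space ?N \<Longrightarrow> snd w \<in> space M \<and> fst w \<in> {0..T}" for w
    using t by (auto simp: space_pair_measure space_restrict_space FB_def space_measure_of_conv)
  ultimately have "(\<lambda>w. inv (\<eta> (snd w) (fst w) x) (u (snd w) (fst w) x)) \<in> borel_measurable ?N"
    using u mono x t unfolding CFB_def by (intro borel_measurable_inv_comp) (auto simp: case_prod_beta')
  then show "(\<lambda>(s,\<omega>). eps \<eta> \<omega> s x (u \<omega> s x)) \<in> borel_measurable ?N"
    by (simp add: eps_def case_prod_beta')
qed

section \<open>Transforming the viscosity conditions\<close>

lemma grad_flow_comp:
  fixes \<eta> :: "'a \<Rightarrow> real \<Rightarrow> real^'n::finite \<Rightarrow> real \<Rightarrow> real"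
  assumes "C2 (\<lambda>(x,y). \<eta> \<omega> t x y)" and "C2 (\<phi> t)"
  shows "grad (\<lambda>x. \<eta> \<omega> t x (\<phi> t x)) x
           = grad (\<lambda>x'. \<eta> \<omega> t x' (\<phi> t x)) x + Dy (\<eta> \<omega>) t x (\<phi> t x) *\<^sub>R grad (\<phi> t) x"
  using grad_comp_graph[OF assms] by (simp add: Dy_def)

lemma Aop_flow_transform:
  fixes \<eta> :: "'a \<Rightarrow> real \<Rightarrow> real^'n::finite \<Rightarrow> real \<Rightarrow> real"
    and f :: "'a \<Rightarrow> real \<Rightarrow> real^'n \<Rightarrow> real \<Rightarrow> real^'d::finite \<Rightarrow> real"
  assumes E: "C2 (\<lambda>(x,y). \<eta> \<omega> t x y)" and P: "C2 (\<phi> t)" and D: "Dy (\<eta> \<omega>) t x (\<phi> t x) > 0"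
  shows "Aop \<sigma> b (f \<omega>) g (\<lambda>t x. \<eta> \<omega> t x (\<phi> t x)) t x - Dy (\<eta> \<omega>) t x (\<phi> t x) * Dt \<phi> t x
       = Dy (\<eta> \<omega>) t x (\<phi> t x) * (Aop \<sigma> b (ftilde \<sigma> b f g \<eta> \<omega>) (\<lambda>t x y. 0) \<phi> t x
                                   - Dy (\<lambda>t x y. y) t x (\<phi> t x) * Dt \<phi> t x)"
proof -
  have Lop: "Lop \<sigma> b (\<lambda>x. \<eta> \<omega> t x (\<phi> t x)) x = Lop \<sigma> b (\<lambda>x'. \<eta> \<omega> t x' (\<phi> t x)) x
          + Dy (\<eta> \<omega>) t x (\<phi> t x) * Lop \<sigma> b (\<phi> t) x
          + sigDx \<sigma> (\<lambda>x'. Dy (\<eta> \<omega>) t x' (\<phi> t x)) x \<bullet> sigDx \<sigma> (\<phi> t) x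
          + Dy (Dy (\<eta> \<omega>)) t x (\<phi> t x) / 2 * (norm (sigDx \<sigma> (\<phi> t) x))\<^sup>2"
    using Lop_comp_graph[OF E P] by (simp add: Dy_def)
  have sigDx: "sigDx \<sigma> (\<lambda>x. \<eta> \<omega> t x (\<phi> t x)) x
      = sigDx \<sigma> (\<lambda>x'. \<eta> \<omega> t x' (\<phi> t x)) x + Dy (\<eta> \<omega>) t x (\<phi> t x) *\<^sub>R sigDx \<sigma> (\<phi> t) x"
    unfolding sigDx_def grad_flow_comp[of \<eta> \<omega> t \<phi>, OF E P]
    by (simp add: matrix_vector_right_distrib matrix_vector_mult_scaleR)
  have "Dy (\<lambda>t x y. y) t x y = 1" for y :: real
    unfolding Dy_def by (rule DERIV_imp_deriv) (rule DERIV_ident)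
  moreover have "gDg (\<lambda>t x y. 0 :: real^'d) t x y = 0" for y
    unfolding gDg_def by simp
  ultimately show ?thesis
    unfolding Aop_def ftilde_def using D by (simp add: Lop sigDx field_simps)
qed

lemma dnormal_flow_transform:
  fixes \<eta> :: "'a \<Rightarrow> real \<Rightarrow> real^'n::finite \<Rightarrow> real \<Rightarrow> real"
  assumes E: "C2 (\<lambda>(x,y). \<eta> \<omega> t x y)" and P: "C2 (\<phi> t)" and D: "Dy (\<eta> \<omega>) t x (\<phi> t x) > 0"
  shows "- dnormal \<phi>G (\<lambda>x. \<eta> \<omega> t x (\<phi> t x)) x - h \<omega> t x (\<eta> \<omega> t x (\<phi> t x))
       = Dy (\<eta> \<omega>) t x (\<phi> t x) * (- dnormal \<phi>G (\<phi> t) x - htilde \<phi>G h \<eta> \<omega> t x (\<phi> t x))"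
  unfolding dnormal_def htilde_def grad_flow_comp[of \<eta> \<omega> t \<phi>, OF E P]
  using D by (simp add: inner_add_left field_simps)

lemma touch_inv_iff:
  fixes E :: "real \<Rightarrow> real^'n::finite \<Rightarrow> real \<Rightarrow> real"
  assumes mono: "\<And>t x. t \<in> {0..T} \<Longrightarrow> bij (E t x) \<and> strict_mono (E t x)" and t0: "t0 \<in> {0..T}"
  shows "touch_above T Gb U (\<lambda>t x. E t x (\<phi> t x)) t0 x0 \<longleftrightarrow> touch_above T Gb (\<lambda>t x. inv (E t x) (U t x)) \<phi> t0 x0"
    and "touch_below T Gb U (\<lambda>t x. E t x (\<phi> t x)) t0 x0 \<longleftrightarrow> touch_below T Gb (\<lambda>t x. inv (E t x) (U t x)) \<phi> t0 x0"
proof -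
  have le: "U t x - E t x (\<phi> t x) \<le> 0 \<longleftrightarrow> inv (E t x) (U t x) - \<phi> t x \<le> 0"
    and ge: "U t x - E t x (\<phi> t x) \<ge> 0 \<longleftrightarrow> inv (E t x) (U t x) - \<phi> t x \<ge> 0" if "t \<in> {0..T}" for t x
    using bij_strict_mono_inv(2,3)[OF mono[OF that, of x, THEN conjunct1] mono[OF that, of x, THEN conjunct2]]
    by simp_all
  have eq: "U t0 x0 - E t0 x0 (\<phi> t0 x0) = 0 \<longleftrightarrow> inv (E t0 x0) (U t0 x0) - \<phi> t0 x0 = 0"
    using le[OF t0, of x0] ge[OF t0, of x0] by linarith
  show "touch_above T Gb U (\<lambda>t x. E t x (\<phi> t x)) t0 x0 \<longleftrightarrow> touch_above T Gb (\<lambda>t x. inv (E t x) (U t x)) \<phi> t0 x0"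
    unfolding touch_above_def using le eq by (simp cong: conj_cong)
  show "touch_below T Gb U (\<lambda>t x. E t x (\<phi> t x)) t0 x0 \<longleftrightarrow> touch_below T Gb (\<lambda>t x. inv (E t x) (U t x)) \<phi> t0 x0"
    unfolding touch_below_def using ge eq by (simp cong: conj_cong)
qed

lemma pos_mult_sign_iff:
  fixes c :: "'a::linordered_ring_strict"
  assumes "0 < c"
  shows "c * a \<le> 0 \<longleftrightarrow> a \<le> 0" and "0 \<le> c * a \<longleftrightarrow> 0 \<le> a"
  using mult_le_cancel_left_pos[OF assms, of a 0] mult_le_cancel_left_pos[OF assms, of 0 a] by simp_all

lemma visc_flow_transform:
  fixes M :: "'a measure" and B :: "real \<Rightarrow> 'a \<Rightarrow> real^'d::finite"
    and G :: "(real^'n::finite) set"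
    and f :: "'a \<Rightarrow> real \<Rightarrow> real^'n \<Rightarrow> real \<Rightarrow> real^'d \<Rightarrow> real"
    and h :: "'a \<Rightarrow> real \<Rightarrow> real^'n \<Rightarrow> real \<Rightarrow> real"
    and g :: "real \<Rightarrow> real^'n \<Rightarrow> real \<Rightarrow> real^'d"
    and \<eta> :: "'a \<Rightarrow> real \<Rightarrow> real^'n \<Rightarrow> real \<Rightarrow> real"
    and u :: "'a \<Rightarrow> real \<Rightarrow> real^'n \<Rightarrow> real"
  assumes mono: "\<forall>\<omega>\<in>space M. \<forall>t\<in>{0..T}. \<forall>x. bij (\<eta> \<omega> t x) \<and> strict_mono (\<eta> \<omega> t x)"
    and Dy_pos: "\<forall>\<omega>\<in>space M. \<forall>t\<in>{0..T}. \<forall>x y. Dy (\<eta> \<omega>) t x y > 0"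
    and C2: "\<forall>\<omega>\<in>space M. \<forall>t\<in>{0..T}. C2 (\<lambda>(x,y). \<eta> \<omega> t x y)"
    and terminal: "\<forall>\<omega>\<in>space M. \<forall>x y. \<eta> \<omega> T x y = y"
    and u: "CFB M B T (closure G) u" and v: "CFB M B T (closure G) (\<lambda>\<omega> t x. eps \<eta> \<omega> t x (u \<omega> t x))"
  shows "visc_sub M B T G \<phi>G \<sigma> b l f g \<eta> h u \<longleftrightarrow>
         visc_sub M B T G \<phi>G \<sigma> b l (ftilde \<sigma> b f g \<eta>) (\<lambda>t x y. 0) (\<lambda>\<omega> t x y. y) (htilde \<phi>G h \<eta>)
                  (\<lambda>\<omega> t x. eps \<eta> \<omega> t x (u \<omega> t x))" (is ?sub)
    and "visc_super M B T G \<phi>G \<sigma> b l f g \<eta> h u \<longleftrightarrow>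
         visc_super M B T G \<phi>G \<sigma> b l (ftilde \<sigma> b f g \<eta>) (\<lambda>t x y. 0) (\<lambda>\<omega> t x y. y) (htilde \<phi>G h \<eta>)
                  (\<lambda>\<omega> t x. eps \<eta> \<omega> t x (u \<omega> t x))" (is ?super)
proof -
  have terminal_v: "eps \<eta> \<omega> T x (u \<omega> T x) = u \<omega> T x" if "\<omega> \<in> space M" for \<omega> x
  proof -
    have "\<eta> \<omega> T x = id" using terminal that by auto
    then show ?thesis by (simp add: eps_def inv_id)
  qed
  have touch: "touch_above T (closure G) (u \<omega>) (\<lambda>t x. \<eta> \<omega> t x (\<phi> \<omega> t x)) (\<tau> \<omega>) (\<xi> \<omega>) \<longleftrightarrow>
                touch_above T (closure G) (\<lambda>t x. eps \<eta> \<omega> t x (u \<omega> t x)) (\<phi> \<omega>) (\<tau> \<omega>) (\<xi> \<omega>)"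
    "touch_below T (closure G) (u \<omega>) (\<lambda>t x. \<eta> \<omega> t x (\<phi> \<omega> t x)) (\<tau> \<omega>) (\<xi> \<omega>) \<longleftrightarrow>
                touch_below T (closure G) (\<lambda>t x. eps \<eta> \<omega> t x (u \<omega> t x)) (\<phi> \<omega>) (\<tau> \<omega>) (\<xi> \<omega>)"
    if "\<omega> \<in> space M" "0 < \<tau> \<omega>" "\<tau> \<omega> < T" for \<tau> \<xi> \<phi> \<omega>
    using touch_inv_iff[of T "\<eta> \<omega>" "\<tau> \<omega>"] mono that unfolding eps_def by auto
  have flow_C2: "C2 (\<lambda>(x,y). \<eta> \<omega> (\<tau> \<omega>) x y)" and flow_Dy_pos: "Dy (\<eta> \<omega>) (\<tau> \<omega>) x y > 0"
    if "bstop M B T \<tau>" "\<omega> \<in> space M" for \<tau> \<omega> x y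
    using that C2 Dy_pos unfolding bstop_def by auto
  have test_C2: "C2 (\<phi> \<omega> (\<tau> \<omega>))" if "C12F M B T \<tau> \<phi>" "\<omega> \<in> space M" for \<tau> \<phi> \<omega>
    using that unfolding C12F_def C12_def by blast
  note flow_transform = Aop_flow_transform dnormal_flow_transform flow_C2 flow_Dy_pos test_C2
  show ?sub
    unfolding visc_sub_def
    by (simp add: u v terminal_v touch flow_transform pos_mult_sign_iff min_le_iff_disj le_max_iff_disj)
  show ?super
    unfolding visc_super_def
    by (simp add: u v terminal_v touch flow_transform pos_mult_sign_iff min_le_iff_disj le_max_iff_disj)
qed

text \<open>Only the pathwise properties of the flow \<open>\<eta>\<close> and the regularity of \<open>u\<close> enter the proof;
  the remaining hypotheses serve, in the paper, to construct \<open>\<eta>\<close> and to make the equation well posed.\<close>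
theorem proposition3p1:
  fixes M :: "'a measure"
    and B :: "real \<Rightarrow> 'a \<Rightarrow> real^'d::finite"
    and T K c \<beta>1 :: real
    and G :: "(real^'n::finite) set"
    and \<phi>G :: "real^'n \<Rightarrow> real"
    and \<sigma> :: "real^'n \<Rightarrow> real^'d^'n"
    and b :: "real^'n \<Rightarrow> real^'n"
    and l :: "real^'n \<Rightarrow> real"
    and f :: "'a \<Rightarrow> real \<Rightarrow> real^'n \<Rightarrow> real \<Rightarrow> real^'d \<Rightarrow> real"
    and h :: "'a \<Rightarrow> real \<Rightarrow> real^'n \<Rightarrow> real \<Rightarrow> real"
    and g :: "real \<Rightarrow> real^'n \<Rightarrow> real \<Rightarrow> real^'d"
    and \<eta> :: "'a \<Rightarrow> real \<Rightarrow> real^'n \<Rightarrow> real \<Rightarrow> real"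
    and u :: "'a \<Rightarrow> real \<Rightarrow> real^'n \<Rightarrow> real"
  assumes BM: "brownian_motion M B"
    and T_pos: "0 < T"
    and G_open: "open G" and G_conn: "connected G" and G_bdd: "bounded G" and G_ne: "G \<noteq> {}"
    and phiG_C2b: "C2b \<phi>G"
    and G_phi: "G = {x. \<phi>G x > 0}" and bd_phi: "frontier G = {x. \<phi>G x = 0}"
    and normal_unit: "\<forall>x\<in>frontier G. norm (grad \<phi>G x) = 1"
    and f_cont: "\<forall>\<omega>\<in>space M. continuous_on ({0..T} \<times> closure G \<times> UNIV \<times> UNIV) (\<lambda>(t,x,y,z). f \<omega> t x y z)"
    and f_lip_x: "\<exists>Lf. \<forall>\<omega>\<in>space M. \<forall>t\<in>{0..T}. \<forall>x\<in>closure G. \<forall>x'\<in>closure G. \<forall>y z.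
                    \<bar>f \<omega> t x y z - f \<omega> t x' y z\<bar> \<le> Lf * dist x x'"
    and f_growth: "\<forall>\<omega>\<in>space M. \<forall>t\<in>{0..T}. \<forall>x\<in>closure G. \<forall>y z.
                    \<bar>f \<omega> t x y z\<bar> \<le> K * (1 + \<bar>y\<bar> + norm x + norm z)"
    and f_lip_yz: "\<forall>\<omega>\<in>space M. \<forall>t\<in>{0..T}. \<forall>x\<in>closure G. \<forall>y1 y2 z1 z2.
                    (f \<omega> t x y1 z1 - f \<omega> t x y2 z2)\<^sup>2 \<le> c * ((y1 - y2)\<^sup>2 + (norm (z1 - z2))\<^sup>2)"
    and h_cont: "\<forall>\<omega>\<in>space M. continuous_on ({0..T} \<times> closure G \<times> UNIV) (\<lambda>(t,x,y). h \<omega> t x y)"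
    and h_lip_x: "\<exists>Lh. \<forall>\<omega>\<in>space M. \<forall>t\<in>{0..T}. \<forall>x\<in>closure G. \<forall>x'\<in>closure G. \<forall>y.
                    \<bar>h \<omega> t x y - h \<omega> t x' y\<bar> \<le> Lh * dist x x'"
    and h_growth: "\<forall>\<omega>\<in>space M. \<forall>t\<in>{0..T}. \<forall>x\<in>closure G. \<forall>y.
                    \<bar>h \<omega> t x y\<bar> \<le> K * (1 + \<bar>y\<bar> + norm x)"
    and h_lip_y: "\<forall>\<omega>\<in>space M. \<forall>t\<in>{0..T}. \<forall>x\<in>closure G. \<forall>y1 y2.
                    \<bar>h \<omega> t x y1 - h \<omega> t x y2\<bar> \<le> \<beta>1 * \<bar>y1 - y2\<bar>"
    and sigma_lip: "\<exists>C. C-lipschitz_on UNIV \<sigma>"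
    and b_lip: "\<exists>C. C-lipschitz_on UNIV b"
    and l_cont: "continuous_on (closure G) l"
    and l_growth: "\<forall>x\<in>closure G. \<bar>l x\<bar> \<le> K * (1 + norm x)"
    and g_reg: "Cb023 T g"
    and eta_diffeo: "\<forall>\<omega>\<in>space M. \<forall>t\<in>{0..T}. \<forall>x. bij (\<eta> \<omega> t x) \<and> strict_mono (\<eta> \<omega> t x)"
    and eta_Dy_pos: "\<forall>\<omega>\<in>space M. \<forall>t\<in>{0..T}. \<forall>x y.
                       ((\<lambda>y'. \<eta> \<omega> t x y') has_real_derivative Dy (\<eta> \<omega>) t x y) (at y) \<and> Dy (\<eta> \<omega>) t x y > 0"
    and eta_terminal: "\<forall>\<omega>\<in>space M. \<forall>x y. \<eta> \<omega> T x y = y"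
    and eta_cont: "\<forall>\<omega>\<in>space M. continuous_on ({0..T} \<times> UNIV \<times> UNIV) (\<lambda>(t,x,y). \<eta> \<omega> t x y)"
    and eta_C2: "\<forall>\<omega>\<in>space M. \<forall>t\<in>{0..T}. C2 (\<lambda>(x,y). \<eta> \<omega> t x y)"
    and eta_meas: "(\<lambda>(\<omega>,(t,x,y)). \<eta> \<omega> t x y) \<in> borel_measurable (FB M B T 0 \<Otimes>\<^sub>M borel)"
    and eta_prog: "\<forall>t\<in>{0..T}. \<forall>x. (\<lambda>(s,(\<omega>,y)). \<eta> \<omega> s x y)
                     \<in> borel_measurable (restrict_space borel {t..T} \<Otimes>\<^sub>M (FB M B T t \<Otimes>\<^sub>M borel))"
    and u_C: "CFB M B T (closure G) u"
  shows "visc_sol M B T G \<phi>G \<sigma> b l f g \<eta> h u \<longleftrightarrow>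
         visc_sol M B T G \<phi>G \<sigma> b l (ftilde \<sigma> b f g \<eta>) (\<lambda>t x y. 0) (\<lambda>\<omega> t x y. y) (htilde \<phi>G h \<eta>)
                  (\<lambda>\<omega> t x. eps \<eta> \<omega> t x (u \<omega> t x))"
proof -
  have Dy_pos: "\<forall>\<omega>\<in>space M. \<forall>t\<in>{0..T}. \<forall>x y. Dy (\<eta> \<omega>) t x y > 0"
    using eta_Dy_pos by blast
  have v_C: "CFB M B T (closure G) (\<lambda>\<omega> t x. eps \<eta> \<omega> t x (u \<omega> t x))"
    by (rule CFB_inv_flow[OF eta_diffeo eta_cont eta_meas eta_prog u_C])
  show ?thesis
    unfolding visc_sol_def
    using visc_flow_transform[OF eta_diffeo Dy_pos eta_C2 eta_terminal u_C v_C] by simp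
qed

end
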